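(* Let $G$ be a finite Frobenius group with Frobenius kernel $K$ and Frobenius complement $H$, so that $G = K \rtimes H$, and suppose that $K$ and $H$ are both abelian, with $|K| = k$ and $|H| = h$. Then \[ AMZA(G) = AMZL(G) = 1 + \frac{2(h^2-1)}{h}\left(1 - \frac{h-1}{k}\right)\left(1 - \frac{1}{k}\right). \]
   Context: A finite group $G$ is a Frobenius group if it has a proper non-trivial subgroup $H$ with $H \cap gHg^{-1} = \{e\}$ for all $g \in G \setminus H$; then $K = \left(G \setminus \bigcup_{g \in G} gHg^{-1}\right) \cup \{e\}$ is a normal subgroup (the Frobenius kernel), $H$ is called the Frobenius complement, and $G = K \rtimes H$. For a finite group $G$, $\mathrm{Irr}(G)$ is the set of irreducible complex characters, $d_\chi = \chi(e)$ is the degree of $\chi$, $\mathrm{Conj}(G)$ is the set of conjugacy classes, $|C|$ is the size of a class $C$, and $\chi(C)$ is the value of $\chi$ on $C$. The amenability constant of a Banach algebra $\mathcal{A}$ is $AM(\mathcal{A}) = \inf\{\sup_\alpha \|d_\alpha\| : (d_\alpha) \text{ a bounded approximate diagonal}\}$, where a bounded approximate diagonal is a bounded net $(d_\alpha)$ in the projective tensor product $\mathcal{A}\hat\otimes\mathcal{A}$ with $a\cdot d_\alpha - d_\alpha\cdot a \to 0$ and $a\, m(d_\alpha) \to a$ for all $a\in\mathcal{A}$ ($m$ the multiplication map); $AM(\mathcal{A})=\infty$ if none exists. $ZL^1(G)$ is the centre of the group algebra $L^1(G)$ (the class functions with the $L^1$ norm), and $ZA(G)$ is the closed span of $\mathrm{Irr}(G)$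 in the Fourier algebra $A(G)$ (the class functions with the Fourier algebra norm). Write $AMZL(G) = AM(ZL^1(G))$ and $AMZA(G) = AM(ZA(G))$. For finite $G$ these are given by \[ AMZL(G) = \frac{1}{|G|^2}\sum_{C,C'\in\mathrm{Conj}(G)} |C||C'|\left|\sum_{\chi\in\mathrm{Irr}(G)} d_\chi^2\,\chi(C)\overline{\chi(C')}\right|,\qquad AMZA(G) = \frac{1}{|G|^2}\sum_{\chi,\chi'\in\mathrm{Irr}(G)} d_\chi d_{\chi'}\left|\sum_{C\in\mathrm{Conj}(G)} |C|^2\,\chi(C)\overline{\chi'(C)}\right|. \] *)

theory Defs
  imports "HOL-Algebra.Group" "HOL-Algebra.Coset" "Jordan_Normal_Form.Matrix"
begin

definition frobenius_complement :: "('a, 'b) monoid_scheme \<Rightarrow> 'a set \<Rightarrow> bool" where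
  "frobenius_complement G H \<longleftrightarrow>
     subgroup H G \<and> H \<noteq> carrier G \<and> H \<noteq> {\<one>\<^bsub>G\<^esub>} \<and>
     (\<forall>g \<in> carrier G - H. H \<inter> (g <#\<^bsub>G\<^esub> H #>\<^bsub>G\<^esub> inv\<^bsub>G\<^esub> g) = {\<one>\<^bsub>G\<^esub>})"

definition frobenius_kernel :: "('a, 'b) monoid_scheme \<Rightarrow> 'a set \<Rightarrow> 'a set" where
  "frobenius_kernel G H =
     (carrier G - (\<Union>g \<in> carrier G. g <#\<^bsub>G\<^esub> H #>\<^bsub>G\<^esub> inv\<^bsub>G\<^esub> g)) \<union> {\<one>\<^bsub>G\<^esub>}"

definition conj_class :: "('a, 'b) monoid_scheme \<Rightarrow> 'a \<Rightarrow> 'a set" where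
  "conj_class G x = {g \<otimes>\<^bsub>G\<^esub> x \<otimes>\<^bsub>G\<^esub> inv\<^bsub>G\<^esub> g | g. g \<in> carrier G}"

definition conj_classes :: "('a, 'b) monoid_scheme \<Rightarrow> 'a set set" where
  "conj_classes G = conj_class G ` carrier G"

definition class_val :: "('a \<Rightarrow> complex) \<Rightarrow> 'a set \<Rightarrow> complex" where
  "class_val \<chi> C = \<chi> (SOME x. x \<in> C)"

definition representation ::
  "('a, 'b) monoid_scheme \<Rightarrow> nat \<Rightarrow> ('a \<Rightarrow> complex mat) \<Rightarrow> bool" where
  "representation G n \<rho> \<longleftrightarrow>
     (\<forall>g \<in> carrier G. \<rho> g \<in> carrier_mat n n) \<and>
     \<rho> \<one>\<^bsub>G\<^esub> = 1\<^sub>m n \<and>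
     (\<forall>x \<in> carrier G. \<forall>y \<in> carrier G. \<rho> (x \<otimes>\<^bsub>G\<^esub> y) = \<rho> x * \<rho> y)"

definition invariant_subspace ::
  "('a, 'b) monoid_scheme \<Rightarrow> nat \<Rightarrow> ('a \<Rightarrow> complex mat) \<Rightarrow> complex vec set \<Rightarrow> bool" where
  "invariant_subspace G n \<rho> W \<longleftrightarrow>
     W \<subseteq> carrier_vec n \<and> 0\<^sub>v n \<in> W \<and>
     (\<forall>v \<in> W. \<forall>w \<in> W. v + w \<in> W) \<and>
     (\<forall>c. \<forall>v \<in> W. c \<cdot>\<^sub>v v \<in> W) \<and>
     (\<forall>g \<in> carrier G. \<forall>v \<in> W. \<rho> g *\<^sub>v v \<in> W)"

definition irreducible_rep ::
  "('a, 'b) monoid_scheme \<Rightarrow> nat \<Rightarrow> ('a \<Rightarrow> complex mat) \<Rightarrow> bool" where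
  "irreducible_rep G n \<rho> \<longleftrightarrow>
     representation G n \<rho> \<and> n > 0 \<and>
     (\<forall>W. invariant_subspace G n \<rho> W \<longrightarrow> W = {0\<^sub>v n} \<or> W = carrier_vec n)"

definition mat_trace :: "complex mat \<Rightarrow> complex" where
  "mat_trace A = (\<Sum>i < dim_row A. A $$ (i, i))"

definition character ::
  "('a, 'b) monoid_scheme \<Rightarrow> ('a \<Rightarrow> complex mat) \<Rightarrow> 'a \<Rightarrow> complex" where
  "character G \<rho> = (\<lambda>g. if g \<in> carrier G then mat_trace (\<rho> g) else 0)"

definition Irr :: "('a, 'b) monoid_scheme \<Rightarrow> ('a \<Rightarrow> complex) set" where
  "Irr G = {\<chi>. \<exists>n \<rho>. irreducible_rep G n \<rho> \<and> \<chi> = character G \<rho>}"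

text \<open>Degree d_chi = chi(e) (a positive integer, hence real).\<close>
definition degree :: "('a, 'b) monoid_scheme \<Rightarrow> ('a \<Rightarrow> complex) \<Rightarrow> real" where
  "degree G \<chi> = Re (\<chi> \<one>\<^bsub>G\<^esub>)"

section \<open>Amenability constants of ZL^1(G) and ZA(G) for finite G (explicit formulas)\<close>

definition AMZL :: "('a, 'b) monoid_scheme \<Rightarrow> real" where
  "AMZL G = (1 / real (card (carrier G)) ^ 2) *
     (\<Sum>C \<in> conj_classes G. \<Sum>C' \<in> conj_classes G.
        real (card C) * real (card C') *
        cmod (\<Sum>\<chi> \<in> Irr G. complex_of_real ((degree G \<chi>)^2) * class_val \<chi> C * cnj (class_val \<chi> C')))"

definition AMZA :: "('a, 'b) monoid_scheme \<Rightarrow> real" where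
  "AMZA G = (1 / real (card (carrier G)) ^ 2) *
     (\<Sum>\<chi> \<in> Irr G. \<Sum>\<chi>' \<in> Irr G.
        degree G \<chi> * degree G \<chi>' *
        cmod (\<Sum>C \<in> conj_classes G. complex_of_real ((real (card C))^2) * class_val \<chi> C * cnj (class_val \<chi>' C)))"

end

theory Submission
  imports Defs "HOL-Algebra.Multiplicative_Group"
begin

section \<open>Linear characters of finite abelian groups\<close>

text \<open>Linear characters are extended by \<open>0\<close> outside the carrier, so that they are determined
  by their values on it.\<close>

definition lin_chars :: "('a, 'b) monoid_scheme \<Rightarrow> ('a \<Rightarrow> complex) set" where
  "lin_chars A = {f. f \<one>\<^bsub>A\<^esub> = 1 \<and> (\<forall>x\<in>carrier A. \<forall>y\<in>carrier A. f (x \<otimes>\<^bsub>A\<^esub> y) = f x * f y) \<and>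
     (\<forall>x. x \<notin> carrier A \<longrightarrow> f x = 0)}"

definition principal_char :: "('a, 'b) monoid_scheme \<Rightarrow> 'a \<Rightarrow> complex" where
  "principal_char A = (\<lambda>x. if x \<in> carrier A then 1 else 0)"

lemma (in group) sum_translate_left:
  assumes "a \<in> carrier G"
  shows "(\<Sum>x\<in>carrier G. F (a \<otimes> x)) = (\<Sum>x\<in>carrier G. F x)"
  by (rule sum.reindex_bij_witness[where i="\<lambda>x. inv a \<otimes> x" and j="\<lambda>x. a \<otimes> x"])
    (use assms in \<open>auto simp: m_assoc[symmetric]\<close>)

lemma (in group) subgroup_nat_pow_closed: "subgroup B G \<Longrightarrow> x \<in> B \<Longrightarrow> x [^] (n::nat) \<in> B"
  by (induction n) (auto simp: subgroup.one_closed subgroup.m_closed)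

locale finite_comm_group = comm_group A for A (structure) +
  assumes finite_carrier: "finite (carrier A)"

lemma (in comm_group) finite_comm_group_subgroup:
  assumes "subgroup B G" "finite (carrier G)"
  shows "finite_comm_group (G\<lparr>carrier := B\<rparr>)"
proof -
  interpret B: group "G\<lparr>carrier := B\<rparr>" using subgroup_imp_group assms by blast
  have "comm_group (G\<lparr>carrier := B\<rparr>)"
    by (rule B.group_comm_groupI) (use assms subgroup.mem_carrier[OF assms(1)] m_comm in auto)
  moreover have "finite B" using assms subgroup.subset finite_subset by metis
  ultimately show ?thesis unfolding finite_comm_group_def finite_comm_group_axioms_def by simp
qed

context finite_comm_group begin

lemma lin_charsD:
  assumes "f \<in> lin_chars A"
  shows "f \<one> = 1" "\<And>x y. x \<in> carrier A \<Longrightarrow> y \<in> carrier A \<Longrightarrow> f (x \<otimes> y) = f x * f y"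
    "\<And>x. x \<notin> carrier A \<Longrightarrow> f x = 0"
  using assms unfolding lin_chars_def by auto

lemma lin_char_mult_inv: "f \<in> lin_chars A \<Longrightarrow> x \<in> carrier A \<Longrightarrow> f x * f (inv x) = 1"
  using lin_charsD[of f] by (metis inv_closed r_inv)

lemma lin_char_pow: "f \<in> lin_chars A \<Longrightarrow> x \<in> carrier A \<Longrightarrow> f (x [^] (n::nat)) = f x ^ n"
  by (induction n) (auto simp: lin_charsD)

lemma order_pos: "0 < order A"
  using finite_carrier order_gt_0_iff_finite by blast

lemma lin_char_root_of_unity: "f \<in> lin_chars A \<Longrightarrow> x \<in> carrier A \<Longrightarrow> f x ^ order A = 1"
  using lin_char_pow[of f x "order A"] pow_order_eq_1[of x] lin_charsD(1)[of f] by simp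

lemma norm_lin_char: "f \<in> lin_chars A \<Longrightarrow> x \<in> carrier A \<Longrightarrow> cmod (f x) = 1"
  using power_eq_1_iff[OF lin_char_root_of_unity] order_pos by simp

lemma lin_char_mult_cnj: "f \<in> lin_chars A \<Longrightarrow> x \<in> carrier A \<Longrightarrow> f x * cnj (f x) = 1"
  using complex_norm_square[of "f x"] norm_lin_char by simp

lemma cnj_lin_char: "f \<in> lin_chars A \<Longrightarrow> x \<in> carrier A \<Longrightarrow> cnj (f x) = f (inv x)"
  using lin_char_mult_cnj lin_char_mult_inv by (metis mult_cancel_left mult_zero_left zero_neq_one)

lemma principal_char_lin_chars: "principal_char A \<in> lin_chars A"
  unfolding lin_chars_def principal_char_def by auto

lemma lin_chars_mult_closed: "f \<in> lin_chars A \<Longrightarrow> g \<in> lin_chars A \<Longrightarrow> (\<lambda>x. f x * g x) \<in> lin_chars A"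
  unfolding lin_chars_def by auto

lemma lin_chars_cnj_closed: "f \<in> lin_chars A \<Longrightarrow> (\<lambda>x. cnj (f x)) \<in> lin_chars A"
  unfolding lin_chars_def by (simp add: complex_cnj_mult)

lemma lin_chars_eqI:
  assumes "f \<in> lin_chars A" "g \<in> lin_chars A" "\<And>x. x \<in> carrier A \<Longrightarrow> f x = g x"
  shows "f = g"
  using assms lin_charsD(3) by (metis ext)

lemma finite_lin_chars: "finite (lin_chars A)"
proof -
  let ?R = "{z::complex. z ^ order A = 1}"
  have "inj_on (\<lambda>f. restrict f (carrier A)) (lin_chars A)"
    by (rule inj_onI) (metis lin_chars_eqI restrict_apply')
  moreover have "(\<lambda>f. restrict f (carrier A)) ` lin_chars A \<subseteq> carrier A \<rightarrow>\<^sub>E ?R"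
    using lin_char_root_of_unity by auto
  moreover have "finite (carrier A \<rightarrow>\<^sub>E ?R)"
    using finite_nth_roots order_pos finite_carrier by (intro finite_PiE) auto
  ultimately show ?thesis by (metis finite_imageD finite_subset)
qed

lemma sum_lin_char_nonprincipal:
  assumes f: "f \<in> lin_chars A" and nt: "f \<noteq> principal_char A"
  shows "(\<Sum>x\<in>carrier A. f x) = 0"
proof -
  obtain y where y: "y \<in> carrier A" "f y \<noteq> 1"
    using nt lin_chars_eqI[OF f principal_char_lin_chars] unfolding principal_char_def by auto
  have "(\<Sum>x\<in>carrier A. f x) = (\<Sum>x\<in>carrier A. f (y \<otimes> x))"
    using sum_translate_left[OF y(1), of f] by simp
  also have "\<dots> = f y * (\<Sum>x\<in>carrier A. f x)"
    by (simp add: sum_distrib_left lin_charsD(2)[OF f] y(1))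
  finally have "(1 - f y) * (\<Sum>x\<in>carrier A. f x) = 0" by (simp add: algebra_simps)
  then show ?thesis using y(2) by simp
qed

lemma lin_chars_orthogonality:
  assumes f: "f \<in> lin_chars A" and g: "g \<in> lin_chars A"
  shows "(\<Sum>x\<in>carrier A. f x * cnj (g x)) = (if f = g then of_nat (order A) else 0)"
proof (cases "f = g")
  case True
  then show ?thesis using lin_char_mult_cnj[OF g] by (simp add: order_def)
next
  case False
  then obtain x where x: "x \<in> carrier A" "f x \<noteq> g x" using lin_chars_eqI[OF f g] by blast
  have "f x * cnj (g x) \<noteq> 1"
    using x lin_char_mult_cnj[OF g x(1)] by (metis mult.commute mult.left_neutral mult.assoc)
  then have "(\<lambda>x. f x * cnj (g x)) \<noteq> principal_char A" using x(1) unfolding principal_char_def by metis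
  then show ?thesis
    using sum_lin_char_nonprincipal lin_chars_mult_closed[OF f lin_chars_cnj_closed[OF g]] False by simp
qed

end

context finite_comm_group begin

lemma pow_period_in_subgroup:
  assumes B: "subgroup B A" and g: "g \<in> carrier A"
  obtains m :: nat where "0 < m" "g [^] m \<in> B" "\<And>d. g [^] d \<in> B \<Longrightarrow> m dvd d"
proof -
  define m where "m = (LEAST m::nat. 0 < m \<and> g [^] m \<in> B)"
  have "\<exists>m::nat. 0 < m \<and> g [^] m \<in> B"
    using order_pos pow_order_eq_1[OF g] subgroup.one_closed[OF B] by auto
  then have m: "0 < m \<and> g [^] m \<in> B" unfolding m_def by (rule LeastI_ex)
  have "m dvd d" if d: "g [^] d \<in> B" for d
  proof -
    have "(g [^] m) [^] (d div m) \<otimes> g [^] (d mod m) = g [^] d"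
      using g by (simp add: nat_pow_pow nat_pow_mult)
    then have "g [^] (d mod m) = inv ((g [^] m) [^] (d div m)) \<otimes> g [^] d"
      using g by (simp add: inv_solve_left)
    then have "g [^] (d mod m) \<in> B"
      using d m B by (simp add: subgroup.m_closed subgroup.m_inv_closed subgroup_nat_pow_closed)
    moreover have "\<not> (0 < d mod m \<and> g [^] (d mod m) \<in> B)"
      using m unfolding m_def by (intro not_less_Least) simp
    ultimately show ?thesis by auto
  qed
  with m that show ?thesis by blast
qed

lemma lin_char_adjoin_consistent:
  assumes B: "subgroup B A" and f: "f \<in> lin_chars (A\<lparr>carrier := B\<rparr>)" and g: "g \<in> carrier A"
    and gm: "g [^] m \<in> B" and period: "\<And>d. g [^] d \<in> B \<Longrightarrow> m dvd d"
    and w: "w ^ m = f (g [^] m)" and b: "b \<in> B" "b' \<in> B" and e: "b \<otimes> g [^] i = b' \<otimes> g [^] (j::nat)"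
  shows "f b * w ^ i = f b' * w ^ j"
proof -
  have Bc: "B \<subseteq> carrier A" using B subgroup.subset by blast
  have f_mult: "f (x \<otimes> y) = f x * f y" if "x \<in> B" "y \<in> B" for x y
    using f that unfolding lin_chars_def by auto
  have f_pow: "f (x [^] n) = f x ^ n" if "x \<in> B" for x and n :: nat
    using f that by (induction n) (auto simp: lin_chars_def f_mult subgroup_nat_pow_closed[OF B])
  have oriented: "f b * w ^ i = f b' * w ^ j"
    if b: "b \<in> B" "b' \<in> B" and e: "b \<otimes> g [^] i = b' \<otimes> g [^] j" and ij: "i \<le> j" for b b' i j
  proof -
    obtain d where j: "j = i + d" using ij le_Suc_ex by blast
    have "b' \<otimes> g [^] j = (b' \<otimes> g [^] d) \<otimes> g [^] i"
      using g b Bc by (simp add: j m_assoc nat_pow_mult add.commute subsetD)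
    then have "b \<otimes> g [^] i = (b' \<otimes> g [^] d) \<otimes> g [^] i" using e by simp
    then have bd: "b = b' \<otimes> g [^] d" using g b Bc by (simp add: subsetD)
    then have "g [^] d = inv b' \<otimes> b" using g b Bc by (simp add: inv_solve_left subsetD)
    then have "g [^] d \<in> B" using B b by (simp add: subgroup.m_closed subgroup.m_inv_closed)
    then obtain q where d: "d = m * q" using period by (auto elim: dvdE)
    have "g [^] d = (g [^] m) [^] q" using g by (simp add: d nat_pow_pow)
    then have "f (g [^] d) = w ^ d" using f_pow[OF gm] w by (simp add: d power_mult)
    then have "f b = f b' * w ^ d" using bd f_mult b \<open>g [^] d \<in> B\<close> by simp
    then show ?thesis by (simp add: j power_add mult_ac)
  qed
  show ?thesis
    using oriented[OF b e] oriented[OF b(2,1) e[symmetric]] by (cases "i \<le> j") auto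
qed

lemma subgroup_adjoin:
  assumes B: "subgroup B A" and g: "g \<in> carrier A"
  shows "subgroup {b \<otimes> g [^] (i::nat) | b i. b \<in> B} A"
proof (rule subgroupI)
  have Bc: "B \<subseteq> carrier A" using B subgroup.subset by blast
  then show "{b \<otimes> g [^] (i::nat) | b i. b \<in> B} \<subseteq> carrier A" using g by auto
  show "{b \<otimes> g [^] (i::nat) | b i. b \<in> B} \<noteq> {}" using subgroup.one_closed[OF B] by blast
  fix x y assume "x \<in> {b \<otimes> g [^] (i::nat) | b i. b \<in> B}" "y \<in> {b \<otimes> g [^] (i::nat) | b i. b \<in> B}"
  then obtain b b' and i j :: nat where x: "b \<in> B" "x = b \<otimes> g [^] i" and y: "b' \<in> B" "y = b' \<otimes> g [^] j"
    by blast
  have "g [^] (i * (order A - 1)) \<otimes> g [^] i = g [^] (order A * i)"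
    using g order_pos by (simp add: nat_pow_mult algebra_simps)
  also have "\<dots> = \<one>" using g by (simp add: nat_pow_pow[symmetric] pow_order_eq_1)
  finally have "inv x = inv b \<otimes> g [^] (i * (order A - 1))"
    using x g Bc by (simp add: inv_mult inv_equality subsetD)
  moreover have "inv b \<in> B" using B x(1) by (rule subgroup.m_inv_closed)
  ultimately show "inv x \<in> {b \<otimes> g [^] (i::nat) | b i. b \<in> B}" by blast
  have "x \<otimes> y = (b \<otimes> b') \<otimes> (g [^] i \<otimes> g [^] j)"
    using x y g Bc by (simp add: m_ac subsetD)
  then have "x \<otimes> y = (b \<otimes> b') \<otimes> g [^] (i + j)" using g by (simp add: nat_pow_mult)
  moreover have "b \<otimes> b' \<in> B" using B x(1) y(1) by (rule subgroup.m_closed)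
  ultimately show "x \<otimes> y \<in> {b \<otimes> g [^] (i::nat) | b i. b \<in> B}" by blast
qed

lemma lin_char_extend_step:
  assumes B: "subgroup B A" and f: "f \<in> lin_chars (A\<lparr>carrier := B\<rparr>)" and g: "g \<in> carrier A"
    and gm: "g [^] m \<in> B" and period: "\<And>d. g [^] d \<in> B \<Longrightarrow> m dvd d"
    and w: "w ^ m = f (g [^] m)"
  shows "\<exists>f'\<in>lin_chars (A\<lparr>carrier := {b \<otimes> g [^] (i::nat) | b i. b \<in> B}\<rparr>).
           (\<forall>b\<in>B. f' b = f b) \<and> f' g = w"
proof -
  define B' where "B' = {b \<otimes> g [^] (i::nat) | b i. b \<in> B}"
  have Bc: "B \<subseteq> carrier A" using B subgroup.subset by blast
  have fB: "f \<one> = 1" "\<And>x y. x \<in> B \<Longrightarrow> y \<in> B \<Longrightarrow> f (x \<otimes> y) = f x * f y"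
    using f unfolding lin_chars_def by auto
  define rep where "rep x = (SOME p. fst p \<in> B \<and> x = fst p \<otimes> g [^] (snd p :: nat))" for x
  define F where "F x = (if x \<in> B' then f (fst (rep x)) * w ^ snd (rep x) else 0)" for x
  have F: "F (b \<otimes> g [^] i) = f b * w ^ i" if b: "b \<in> B" for b i
  proof -
    let ?p = "rep (b \<otimes> g [^] i)"
    have p: "fst ?p \<in> B \<and> b \<otimes> g [^] i = fst ?p \<otimes> g [^] snd ?p"
      unfolding rep_def by (rule someI[of _ "(b, i)"]) (simp add: b)
    have "b \<otimes> g [^] i \<in> B'" unfolding B'_def using b by blast
    then have "F (b \<otimes> g [^] i) = f (fst ?p) * w ^ snd ?p" unfolding F_def by simp
    also have "\<dots> = f b * w ^ i"
      using lin_char_adjoin_consistent[OF B f g gm period w _ b] p by metis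
    finally show ?thesis .
  qed
  have "F \<in> lin_chars (A\<lparr>carrier := B'\<rparr>)"
    unfolding lin_chars_def
  proof (simp, intro conjI ballI allI impI)
    show "F \<one> = 1" using F[of \<one> 0] fB(1) subgroup.one_closed[OF B] by simp
    fix x y assume "x \<in> B'" "y \<in> B'"
    then obtain b b' and i j :: nat where x: "b \<in> B" "x = b \<otimes> g [^] i" and y: "b' \<in> B" "y = b' \<otimes> g [^] j"
      unfolding B'_def by blast
    have "x \<otimes> y = (b \<otimes> b') \<otimes> (g [^] i \<otimes> g [^] j)"
      using x y g Bc by (simp add: m_ac subsetD)
    then have "x \<otimes> y = (b \<otimes> b') \<otimes> g [^] (i + j)" using g by (simp add: nat_pow_mult)
    then show "F (x \<otimes> y) = F x * F y"
      using F x y fB(2) subgroup.m_closed[OF B x(1) y(1)] by (simp add: power_add)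
  qed (simp add: F_def)
  moreover have "F b = f b" if "b \<in> B" for b using F[OF that, of 0] that Bc by (simp add: subsetD)
  moreover have "F g = w" using F[of \<one> 1] fB(1) subgroup.one_closed[OF B] g by simp
  ultimately show ?thesis unfolding B'_def by blast
qed

lemma lin_char_extend:
  assumes "subgroup B A" "f \<in> lin_chars (A\<lparr>carrier := B\<rparr>)"
  shows "\<exists>f'\<in>lin_chars A. \<forall>b\<in>B. f' b = f b"
  using assms
proof (induction "card (carrier A) - card B" arbitrary: B f rule: less_induct)
  case less
  show ?case
  proof (cases "B = carrier A")
    case True
    then show ?thesis using less.prems(2) by (auto simp: lin_chars_def)
  next
    case False
    have Bc: "B \<subseteq> carrier A" using less.prems(1) subgroup.subset by blast
    then obtain g where g: "g \<in> carrier A" "g \<notin> B" using False by blast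
    interpret B: finite_comm_group "A\<lparr>carrier := B\<rparr>"
      using finite_comm_group_subgroup less.prems(1) finite_carrier by blast
    obtain m :: nat where m: "0 < m" "g [^] m \<in> B" "\<And>d. g [^] d \<in> B \<Longrightarrow> m dvd d"
      using pow_period_in_subgroup[OF less.prems(1) g(1)] by blast
    have "f (g [^] m) \<noteq> 0" using B.norm_lin_char[OF less.prems(2), of "g [^] m"] m(2) by auto
    then have "card {w. w ^ m = f (g [^] m)} = m" using m(1) by (rule card_nth_roots)
    then obtain w where w: "w ^ m = f (g [^] m)" using m(1) card_gt_0_iff by force
    define B' where "B' = {b \<otimes> g [^] (i::nat) | b i. b \<in> B}"
    obtain f' where f': "f' \<in> lin_chars (A\<lparr>carrier := B'\<rparr>)" "\<forall>b\<in>B. f' b = f b"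
      using lin_char_extend_step[OF less.prems g(1) m(2,3) w] unfolding B'_def by blast
    have B': "subgroup B' A" unfolding B'_def by (rule subgroup_adjoin[OF less.prems(1) g(1)])
    have "B \<subset> B'"
    proof -
      have "b \<in> B'" if "b \<in> B" for b
        unfolding B'_def using that Bc by (intro CollectI exI[of _ b] exI[of _ "0::nat"]) auto
      moreover have "g \<in> B'" unfolding B'_def using g(1) subgroup.one_closed[OF less.prems(1)]
        by (intro CollectI exI[of _ \<one>] exI[of _ "1::nat"]) auto
      ultimately show ?thesis using g(2) by blast
    qed
    moreover have "B' \<subseteq> carrier A" using B' subgroup.subset by blast
    moreover have "finite B'" using calculation(2) finite_carrier finite_subset by blast
    ultimately have "card B < card B'" "card B' \<le> card (carrier A)"
      using psubset_card_mono card_mono finite_carrier by blast+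
    then have "card (carrier A) - card B' < card (carrier A) - card B" by linarith
    then obtain f'' where f'': "f'' \<in> lin_chars A" "\<forall>b\<in>B'. f'' b = f' b"
      using less.hyps B' f'(1) by blast
    have "\<forall>b\<in>B. f'' b = f b" using f''(2) f'(2) \<open>B \<subset> B'\<close> by auto
    with f''(1) show ?thesis by blast
  qed
qed

lemma lin_chars_separate:
  assumes x: "x \<in> carrier A" "x \<noteq> \<one>"
  obtains f where "f \<in> lin_chars A" "f x \<noteq> 1"
proof -
  have triv: "subgroup {\<one>} A" by (rule triv_subgroup)
  have f0: "principal_char (A\<lparr>carrier := {\<one>}\<rparr>) \<in> lin_chars (A\<lparr>carrier := {\<one>}\<rparr>)"
    unfolding lin_chars_def principal_char_def by auto
  obtain m :: nat where m: "0 < m" "x [^] m \<in> {\<one>}" "\<And>d. x [^] d \<in> {\<one>} \<Longrightarrow> m dvd d"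
    using pow_period_in_subgroup[OF triv x(1)] by blast
  have "m \<noteq> 1" using m(2) x by auto
  have "\<exists>w::complex. w ^ m = 1 \<and> w \<noteq> 1"
  proof (rule ccontr)
    assume "\<not> ?thesis"
    then have "{w::complex. w ^ m = 1} \<subseteq> {1}" by blast
    then have "card {w::complex. w ^ m = 1} \<le> 1" using card_mono[of "{1::complex}"] by simp
    then show False using card_roots_unity_eq[of m] m(1) \<open>m \<noteq> 1\<close> by simp
  qed
  then obtain w :: complex where w: "w ^ m = 1" "w \<noteq> 1" by blast
  have "w ^ m = principal_char (A\<lparr>carrier := {\<one>}\<rparr>) (x [^] m)"
    using w(1) m(2) by (simp add: principal_char_def)
  then obtain f' where f': "f' \<in> lin_chars (A\<lparr>carrier := {b \<otimes> x [^] (i::nat) | b i. b \<in> {\<one>}}\<rparr>)"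
    "f' x = w"
    using lin_char_extend_step[OF triv f0 x(1) m(2,3)] by blast
  obtain f'' where f'': "f'' \<in> lin_chars A" "\<forall>b\<in>{b \<otimes> x [^] (i::nat) | b i. b \<in> {\<one>}}. f'' b = f' b"
    using lin_char_extend[OF subgroup_adjoin[OF triv x(1)] f'(1)] by blast
  have "x \<in> {b \<otimes> x [^] (i::nat) | b i. b \<in> {\<one>}}"
    using x(1) by (intro CollectI exI[of _ \<one>] exI[of _ "1::nat"]) auto
  then have "f'' x \<noteq> 1" using f''(2) f'(2) w(2) by simp
  with f''(1) show ?thesis by (rule that)
qed

lemma sum_lin_chars:
  assumes x: "x \<in> carrier A"
  shows "(\<Sum>f\<in>lin_chars A. f x) = (if x = \<one> then of_nat (card (lin_chars A)) else 0)"
proof (cases "x = \<one>")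
  case True
  then have "(\<Sum>f\<in>lin_chars A. f x) = (\<Sum>f\<in>lin_chars A. 1)" using lin_charsD(1) by (intro sum.cong) auto
  then show ?thesis using True by simp
next
  case False
  obtain f0 where f0: "f0 \<in> lin_chars A" "f0 x \<noteq> 1" using lin_chars_separate[OF x False] by blast
  have cancel: "(\<lambda>y. f0 y * (cnj (f0 y) * f y)) = f" "(\<lambda>y. cnj (f0 y) * (f0 y * f y)) = f"
    if "f \<in> lin_chars A" for f
    using lin_char_mult_cnj[OF f0(1)] lin_charsD(3)[OF that]
    by (auto simp: fun_eq_iff mult.assoc[symmetric] mult.commute[of "cnj _"])
  have "(\<Sum>f\<in>lin_chars A. f x) = (\<Sum>f\<in>lin_chars A. f0 x * f x)"
  proof (rule sum.reindex_bij_witness[where j="\<lambda>f y. cnj (f0 y) * f y" and i="\<lambda>f y. f0 y * f y"])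
    fix f assume f: "f \<in> lin_chars A"
    show "(\<lambda>y. f0 y * f y) \<in> lin_chars A" using lin_chars_mult_closed[OF f0(1) f] .
    show "(\<lambda>y. cnj (f0 y) * f y) \<in> lin_chars A"
      using lin_chars_mult_closed[OF lin_chars_cnj_closed[OF f0(1)] f] .
    show "(\<lambda>y. f0 y * (cnj (f0 y) * f y)) = f" "(\<lambda>y. cnj (f0 y) * (f0 y * f y)) = f"
      using cancel[OF f] by auto
    show "f0 x * (cnj (f0 x) * f x) = f x" using fun_cong[OF cancel(1)[OF f], of x] .
  qed
  also have "\<dots> = f0 x * (\<Sum>f\<in>lin_chars A. f x)" by (simp add: sum_distrib_left)
  finally have "(1 - f0 x) * (\<Sum>f\<in>lin_chars A. f x) = 0" by (simp add: algebra_simps)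
  then show ?thesis using f0(2) False by simp
qed

lemma card_lin_chars: "card (lin_chars A) = order A"
proof -
  have "(\<Sum>x\<in>carrier A. \<Sum>f\<in>lin_chars A. f x) = of_nat (card (lin_chars A))"
    using sum_lin_chars finite_carrier by (simp add: sum.delta)
  moreover have "(\<Sum>f\<in>lin_chars A. \<Sum>x\<in>carrier A. f x) = of_nat (order A)"
  proof -
    have "(\<Sum>f\<in>lin_chars A. \<Sum>x\<in>carrier A. f x) =
        (\<Sum>f\<in>lin_chars A. if f = principal_char A then of_nat (order A) else 0)"
      using sum_lin_char_nonprincipal by (intro sum.cong) (auto simp: principal_char_def order_def)
    then show ?thesis using principal_char_lin_chars finite_lin_chars by simp
  qed
  moreover have "(\<Sum>x\<in>carrier A. \<Sum>f\<in>lin_chars A. f x) = (\<Sum>f\<in>lin_chars A. \<Sum>x\<in>carrier A. f x)"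
    by (rule sum.swap)
  ultimately have "(of_nat (card (lin_chars A)) :: complex) = of_nat (order A)" by simp
  then show ?thesis using of_nat_eq_iff by blast
qed

lemma lin_chars_column_orthogonality:
  assumes x: "x \<in> carrier A" and y: "y \<in> carrier A"
  shows "(\<Sum>f\<in>lin_chars A. f x * cnj (f y)) = (if x = y then of_nat (order A) else 0)"
proof -
  have "(\<Sum>f\<in>lin_chars A. f x * cnj (f y)) = (\<Sum>f\<in>lin_chars A. f (x \<otimes> inv y))"
    using cnj_lin_char lin_charsD(2) x y by (intro sum.cong) auto
  also have "x \<otimes> inv y = \<one> \<longleftrightarrow> x = y" using inv_solve_right'[OF one_closed x y] y by simp
  then have "(\<Sum>f\<in>lin_chars A. f (x \<otimes> inv y)) = (if x = y then of_nat (order A) else 0)"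
    using sum_lin_chars[of "x \<otimes> inv y"] card_lin_chars x y by simp
  finally show ?thesis .
qed

end

context group begin

lemma inv_mult_cancel_left: "a \<in> carrier G \<Longrightarrow> b \<in> carrier G \<Longrightarrow> inv a \<otimes> (a \<otimes> b) = b"
  by (simp add: m_assoc[symmetric])

lemma mult_inv_cancel_left: "a \<in> carrier G \<Longrightarrow> b \<in> carrier G \<Longrightarrow> a \<otimes> (inv a \<otimes> b) = b"
  by (simp add: m_assoc[symmetric])

lemma conj_class_subset: "x \<in> carrier G \<Longrightarrow> conj_class G x \<subseteq> carrier G"
  unfolding conj_class_def by auto

lemma conj_class_self: "x \<in> carrier G \<Longrightarrow> x \<in> conj_class G x"
  unfolding conj_class_def by (rule CollectI, rule exI[of _ \<one>]) simp

lemma conj_class_one: "conj_class G \<one> = {\<one>}"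
  unfolding conj_class_def by (auto intro: exI[of _ \<one>])

lemma conj_eq_one_iff: "g \<in> carrier G \<Longrightarrow> x \<in> carrier G \<Longrightarrow> g \<otimes> x \<otimes> inv g = \<one> \<longleftrightarrow> x = \<one>"
  by (simp add: inv_solve_right')

lemma conj_classI: "g \<in> carrier G \<Longrightarrow> z = g \<otimes> x \<otimes> inv g \<Longrightarrow> z \<in> conj_class G x"
  unfolding conj_class_def by blast

lemma conj_classE:
  assumes "z \<in> conj_class G x"
  obtains g where "g \<in> carrier G" "z = g \<otimes> x \<otimes> inv g"
  using assms unfolding conj_class_def by blast

lemma conj_class_conj:
  assumes y: "y \<in> carrier G" and x: "x \<in> carrier G"
  shows "conj_class G (y \<otimes> x \<otimes> inv y) = conj_class G x"
proof (intro equalityI subsetI)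
  fix z assume "z \<in> conj_class G (y \<otimes> x \<otimes> inv y)"
  then obtain g where g: "g \<in> carrier G" "z = g \<otimes> (y \<otimes> x \<otimes> inv y) \<otimes> inv g" by (rule conj_classE)
  then have "z = (g \<otimes> y) \<otimes> x \<otimes> inv (g \<otimes> y)" using x y by (simp add: m_assoc inv_mult_group)
  then show "z \<in> conj_class G x" using g(1) y by (intro conj_classI) auto
next
  fix z assume "z \<in> conj_class G x"
  then obtain g where g: "g \<in> carrier G" "z = g \<otimes> x \<otimes> inv g" by (rule conj_classE)
  then have "z = (g \<otimes> inv y) \<otimes> (y \<otimes> x \<otimes> inv y) \<otimes> inv (g \<otimes> inv y)"
    using x y by (simp add: m_assoc inv_mult_group inv_mult_cancel_left)
  then show "z \<in> conj_class G (y \<otimes> x \<otimes> inv y)" using g(1) y by (intro conj_classI) auto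
qed

lemma conj_class_eq:
  assumes x: "x \<in> carrier G" and y: "y \<in> conj_class G x"
  shows "conj_class G y = conj_class G x"
proof -
  obtain g where "g \<in> carrier G" "y = g \<otimes> x \<otimes> inv g" using y by (rule conj_classE)
  then show ?thesis using conj_class_conj x by simp
qed

lemma sum_conj_classes:
  assumes fin: "finite (carrier G)"
  shows "(\<Sum>C\<in>conj_classes G. of_nat (card C) * F C) =
         (\<Sum>g\<in>carrier G. (F (conj_class G g) :: 'c :: comm_semiring_1))"
proof -
  have "(\<Sum>g\<in>carrier G. F (conj_class G g)) =
      (\<Sum>C\<in>conj_classes G. \<Sum>g\<in>{g \<in> carrier G. conj_class G g = C}. F (conj_class G g))"
    by (rule sum.group[symmetric]) (use fin in \<open>auto simp: conj_classes_def\<close>)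
  also have "\<dots> = (\<Sum>C\<in>conj_classes G. of_nat (card C) * F C)"
  proof (rule sum.cong[OF refl])
    fix C assume "C \<in> conj_classes G"
    then obtain x where x: "x \<in> carrier G" "C = conj_class G x" unfolding conj_classes_def by auto
    have "{g \<in> carrier G. conj_class G g = C} = C"
      using x conj_class_self conj_class_eq conj_class_subset by blast
    then show "(\<Sum>g\<in>{g \<in> carrier G. conj_class G g = C}. F (conj_class G g)) = of_nat (card C) * F C"
      using x conj_class_eq by simp
  qed
  finally show ?thesis by simp
qed

end

lemma index_mult_mat_sum:
  "A \<in> carrier_mat p q \<Longrightarrow> B \<in> carrier_mat q r \<Longrightarrow> a < p \<Longrightarrow> b < r \<Longrightarrow>
   (A * B) $$ (a, b) = (\<Sum>c<q. A $$ (a, c) * B $$ (c, b))"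
  by (simp add: scalar_prod_def atLeast0LessThan)

lemma mat_trace_mult_comm:
  assumes "(A :: complex mat) \<in> carrier_mat n m" "B \<in> carrier_mat m n"
  shows "mat_trace (A * B) = mat_trace (B * A)"
proof -
  have dims: "dim_row (A * B) = n" "dim_row (B * A) = m" using assms by auto
  have "mat_trace (A * B) = (\<Sum>i<n. \<Sum>k<m. A $$ (i, k) * B $$ (k, i))"
    unfolding mat_trace_def dims
    by (intro sum.cong) (simp_all add: index_mult_mat_sum[OF assms] del: index_mult_mat)
  also have "\<dots> = (\<Sum>k<m. \<Sum>i<n. B $$ (k, i) * A $$ (i, k))"
    by (subst sum.swap) (simp add: mult.commute)
  also have "\<dots> = mat_trace (B * A)"
    unfolding mat_trace_def dims
    by (intro sum.cong) (simp_all add: index_mult_mat_sum[OF assms(2,1)] del: index_mult_mat)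
  finally show ?thesis .
qed

lemma representationD:
  assumes "representation G n \<rho>"
  shows "\<And>g. g \<in> carrier G \<Longrightarrow> \<rho> g \<in> carrier_mat n n" "\<rho> \<one>\<^bsub>G\<^esub> = 1\<^sub>m n"
    "\<And>x y. x \<in> carrier G \<Longrightarrow> y \<in> carrier G \<Longrightarrow> \<rho> (x \<otimes>\<^bsub>G\<^esub> y) = \<rho> x * \<rho> y"
  using assms unfolding representation_def by auto

lemma (in group) character_one: "representation G n \<rho> \<Longrightarrow> character G \<rho> \<one> = of_nat n"
  unfolding representation_def character_def mat_trace_def by simp

lemma (in group) character_conj:
  assumes r: "representation G n \<rho>" and g: "g \<in> carrier G" and y: "y \<in> carrier G"
  shows "character G \<rho> (y \<otimes> g \<otimes> inv y) = character G \<rho> g"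
proof -
  note D = representationD[OF r]
  have c: "\<rho> y \<in> carrier_mat n n" "\<rho> g \<in> carrier_mat n n" "\<rho> (inv y) \<in> carrier_mat n n"
    using D(1) g y by auto
  have "mat_trace (\<rho> (y \<otimes> g \<otimes> inv y)) = mat_trace ((\<rho> y * \<rho> g) * \<rho> (inv y))" using D g y by simp
  also have "\<dots> = mat_trace (\<rho> (inv y) * (\<rho> y * \<rho> g))"
    by (rule mat_trace_mult_comm) (use c in auto)
  also have "\<rho> (inv y) * (\<rho> y * \<rho> g) = (\<rho> (inv y) * \<rho> y) * \<rho> g"
    using assoc_mult_mat[OF c(3) c(1) c(2)] by simp
  also have "\<rho> (inv y) * \<rho> y = 1\<^sub>m n" using D(3)[of "inv y" y] D(2) y by simp
  finally show ?thesis unfolding character_def using g y c(2) by simp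
qed

lemma (in group) Irr_conj:
  "\<chi> \<in> Irr G \<Longrightarrow> g \<in> carrier G \<Longrightarrow> y \<in> carrier G \<Longrightarrow> \<chi> (y \<otimes> g \<otimes> inv y) = \<chi> g"
  using character_conj unfolding Irr_def irreducible_rep_def by auto

lemma (in group) class_val_Irr:
  assumes chi: "\<chi> \<in> Irr G" and g: "g \<in> carrier G"
  shows "class_val \<chi> (conj_class G g) = \<chi> g"
proof -
  have "(SOME x. x \<in> conj_class G g) \<in> conj_class G g" using conj_class_self[OF g] by (rule someI)
  then obtain y where "y \<in> carrier G" "(SOME x. x \<in> conj_class G g) = y \<otimes> g \<otimes> inv y"
    unfolding conj_class_def by auto
  then show ?thesis unfolding class_val_def using Irr_conj[OF chi g] by simp
qed

lemma irreducible_rep_dim_one: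
  assumes "representation G 1 \<rho>"
  shows "irreducible_rep G 1 \<rho>"
  unfolding irreducible_rep_def
proof (intro conjI allI impI assms)
  fix W assume W: "invariant_subspace G 1 \<rho> W"
  have Wc: "W \<subseteq> carrier_vec 1" and W0: "0\<^sub>v 1 \<in> W" and smult: "\<And>c v. v \<in> W \<Longrightarrow> c \<cdot>\<^sub>v v \<in> W"
    using W unfolding invariant_subspace_def by auto
  show "W = {0\<^sub>v 1} \<or> W = carrier_vec 1"
  proof (cases "W \<subseteq> {0\<^sub>v 1}")
    case False
    then obtain v where v: "v \<in> W" "v \<noteq> 0\<^sub>v 1" by blast
    have vc: "v \<in> carrier_vec 1" using v Wc by auto
    have "v $ 0 \<noteq> 0"
    proof
      assume "v $ 0 = 0"
      then have "v = 0\<^sub>v 1" using vc by (intro eq_vecI) auto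
      then show False using v(2) by simp
    qed
    have "carrier_vec 1 \<subseteq> W"
    proof
      fix w :: "complex vec" assume "w \<in> carrier_vec 1"
      then have "w = (w $ 0 / v $ 0) \<cdot>\<^sub>v v" using vc \<open>v $ 0 \<noteq> 0\<close> by (intro eq_vecI) auto
      then show "w \<in> W" by (subst \<open>w = _\<close>) (rule smult[OF v(1)])
    qed
    then show ?thesis using Wc by blast
  qed (use W0 in blast)
qed simp

section \<open>Schur orthogonality\<close>

lemma intertwiner_kernel_invariant:
  assumes \<sigma>: "representation G m \<sigma>" and \<rho>: "representation G n \<rho>" and T: "T \<in> carrier_mat n m"
    and inter: "\<And>g. g \<in> carrier G \<Longrightarrow> T * \<sigma> g = \<rho> g * T"
  shows "invariant_subspace G m \<sigma> {v \<in> carrier_vec m. T *\<^sub>v v = 0\<^sub>v n}"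
  unfolding invariant_subspace_def
proof (intro conjI ballI allI)
  fix g v assume g: "g \<in> carrier G" and v: "v \<in> {v \<in> carrier_vec m. T *\<^sub>v v = 0\<^sub>v n}"
  have "T *\<^sub>v (\<sigma> g *\<^sub>v v) = (\<rho> g * T) *\<^sub>v v"
    using T representationD(1)[OF \<sigma> g] v inter[OF g] by (auto simp flip: assoc_mult_mat_vec)
  also have "\<dots> = 0\<^sub>v n" using T representationD(1)[OF \<rho> g] v by auto
  finally show "\<sigma> g *\<^sub>v v \<in> {v \<in> carrier_vec m. T *\<^sub>v v = 0\<^sub>v n}"
    using representationD(1)[OF \<sigma> g] v by auto
qed (use T in \<open>auto simp: mult_add_distrib_mat_vec mult_mat_vec\<close>)

lemma intertwiner_image_invariant:
  assumes \<sigma>: "representation G m \<sigma>" and \<rho>: "representation G n \<rho>" and T: "T \<in> carrier_mat n m"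
    and inter: "\<And>g. g \<in> carrier G \<Longrightarrow> T * \<sigma> g = \<rho> g * T"
  shows "invariant_subspace G n \<rho> ((\<lambda>v. T *\<^sub>v v) ` carrier_vec m)"
  unfolding invariant_subspace_def
proof (intro conjI ballI allI)
  show "0\<^sub>v n \<in> (\<lambda>v. T *\<^sub>v v) ` carrier_vec m" using T by (intro image_eqI[of _ _ "0\<^sub>v m"]) auto
next
  fix v w assume "v \<in> (\<lambda>v. T *\<^sub>v v) ` carrier_vec m" "w \<in> (\<lambda>v. T *\<^sub>v v) ` carrier_vec m"
  then show "v + w \<in> (\<lambda>v. T *\<^sub>v v) ` carrier_vec m"
    using T by (auto simp flip: mult_add_distrib_mat_vec)
next
  fix c v assume "v \<in> (\<lambda>v. T *\<^sub>v v) ` carrier_vec m"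
  then show "c \<cdot>\<^sub>v v \<in> (\<lambda>v. T *\<^sub>v v) ` carrier_vec m"
    using T by (auto simp flip: mult_mat_vec)
next
  fix g v assume g: "g \<in> carrier G" and "v \<in> (\<lambda>v. T *\<^sub>v v) ` carrier_vec m"
  then obtain u where u: "u \<in> carrier_vec m" "v = T *\<^sub>v u" by blast
  have "\<rho> g *\<^sub>v v = T *\<^sub>v (\<sigma> g *\<^sub>v u)"
    using u T representationD(1)[OF \<rho> g] representationD(1)[OF \<sigma> g] inter[OF g]
    by (auto simp flip: assoc_mult_mat_vec)
  then show "\<rho> g *\<^sub>v v \<in> (\<lambda>v. T *\<^sub>v v) ` carrier_vec m"
    using u representationD(1)[OF \<sigma> g] by auto
qed (use T in auto)

lemma mult_mat_vec_unit_vec: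
  "(A :: 'a :: semiring_1 mat) \<in> carrier_mat n m \<Longrightarrow> i < n \<Longrightarrow> j < m \<Longrightarrow> (A *\<^sub>v unit_vec m j) $ i = A $$ (i, j)"
  by simp

lemma mat_inverse_of_bijective:
  assumes T: "(T :: 'a :: field mat) \<in> carrier_mat n m"
    and inj: "\<And>v. v \<in> carrier_vec m \<Longrightarrow> T *\<^sub>v v = 0\<^sub>v n \<Longrightarrow> v = 0\<^sub>v m"
    and surj: "carrier_vec n \<subseteq> (\<lambda>v. T *\<^sub>v v) ` carrier_vec m"
  obtains S where "S \<in> carrier_mat m n" "T * S = 1\<^sub>m n" "S * T = 1\<^sub>m m"
proof -
  define pre where "pre j = (SOME v. v \<in> carrier_vec m \<and> T *\<^sub>v v = unit_vec n j)" for j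
  have pre: "pre j \<in> carrier_vec m \<and> T *\<^sub>v pre j = unit_vec n j" if "j < n" for j
  proof -
    have "unit_vec n j \<in> (\<lambda>v. T *\<^sub>v v) ` carrier_vec m" using surj by auto
    then have "\<exists>v. v \<in> carrier_vec m \<and> T *\<^sub>v v = unit_vec n j" by auto
    then show ?thesis unfolding pre_def by (rule someI_ex)
  qed
  define S where "S = mat m n (\<lambda>(i, j). pre j $ i)"
  have S: "S \<in> carrier_mat m n" unfolding S_def by simp
  have col_S: "col S j = pre j" if "j < n" for j
    using pre[OF that] that unfolding S_def by (intro eq_vecI) auto
  have TS: "T * S = 1\<^sub>m n"
  proof (rule eq_matI)
    fix i j assume ij: "i < dim_row (1\<^sub>m n :: 'a mat)" "j < dim_col (1\<^sub>m n :: 'a mat)"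
    then have "(T * S) $$ (i, j) = (T *\<^sub>v col S j) $ i" using T S by simp
    then show "(T * S) $$ (i, j) = 1\<^sub>m n $$ (i, j)" using col_S pre ij by simp
  qed (use T S in auto)
  have ST: "S * T = 1\<^sub>m m"
  proof (rule eq_matI)
    fix i j assume ij: "i < dim_row (1\<^sub>m m :: 'a mat)" "j < dim_col (1\<^sub>m m :: 'a mat)"
    define u where "u = S *\<^sub>v (T *\<^sub>v unit_vec m j)"
    have u: "u \<in> carrier_vec m" unfolding u_def using S T by simp
    have "T *\<^sub>v u = (T * S) *\<^sub>v (T *\<^sub>v unit_vec m j)" unfolding u_def using S T by simp
    also have "\<dots> = T *\<^sub>v unit_vec m j" using TS T by simp
    finally have "T *\<^sub>v (u - unit_vec m j) = 0\<^sub>v n"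
      using T u by (simp add: mult_minus_distrib_mat_vec)
    then have "u - unit_vec m j = 0\<^sub>v m" by (rule inj[rotated]) (use u in simp)
    have "u = unit_vec m j"
    proof (rule eq_vecI)
      fix k assume k: "k < dim_vec (unit_vec m j)"
      then have "(u - unit_vec m j) $ k = 0" using \<open>u - unit_vec m j = 0\<^sub>v m\<close> by simp
      then show "u $ k = unit_vec m j $ k" using u k by simp
    qed (use u in simp)
    have "(S * T) *\<^sub>v unit_vec m j = u" unfolding u_def using S T by simp
    then show "(S * T) $$ (i, j) = 1\<^sub>m m $$ (i, j)"
      using mult_mat_vec_unit_vec[of "S * T" m m i j] ij S T \<open>u = unit_vec m j\<close> by simp
  qed (use T S in auto)
  show ?thesis using S TS ST by (rule that)
qed

lemma schur_character_eq:
  assumes \<rho>: "irreducible_rep G n \<rho>" and \<sigma>: "irreducible_rep G m \<sigma>" and T: "T \<in> carrier_mat n m"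
    and inter: "\<And>g. g \<in> carrier G \<Longrightarrow> T * \<sigma> g = \<rho> g * T" and nz: "T \<noteq> 0\<^sub>m n m"
  shows "character G \<sigma> = character G \<rho>"
proof -
  have rep: "representation G n \<rho>" "representation G m \<sigma>"
    using \<rho> \<sigma> unfolding irreducible_rep_def by auto
  have "\<exists>i<n. \<exists>j<m. T $$ (i, j) \<noteq> 0"
  proof (rule ccontr)
    assume "\<not> ?thesis"
    then have "T = 0\<^sub>m n m" using T by (intro eq_matI) auto
    with nz show False by simp
  qed
  then obtain i j where ij: "i < n" "j < m" "T $$ (i, j) \<noteq> 0" by blast
  have col: "T *\<^sub>v unit_vec m j \<noteq> 0\<^sub>v n"
  proof
    assume "T *\<^sub>v unit_vec m j = 0\<^sub>v n"
    then have "(T *\<^sub>v unit_vec m j) $ i = 0" using ij(1) by simp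
    then show False using mult_mat_vec_unit_vec[OF T ij(1,2)] ij(3) by simp
  qed
  have "unit_vec m j \<notin> {v \<in> carrier_vec m. T *\<^sub>v v = 0\<^sub>v n}" using col by blast
  then have "{v \<in> carrier_vec m. T *\<^sub>v v = 0\<^sub>v n} \<noteq> carrier_vec m" using unit_vec_carrier[of m j] by blast
  then have ker: "{v \<in> carrier_vec m. T *\<^sub>v v = 0\<^sub>v n} = {0\<^sub>v m}"
    using \<sigma> intertwiner_kernel_invariant[OF rep(2,1) T inter] unfolding irreducible_rep_def by blast
  have "T *\<^sub>v unit_vec m j \<in> (\<lambda>v. T *\<^sub>v v) ` carrier_vec m" by (rule imageI) simp
  then have "(\<lambda>v. T *\<^sub>v v) ` carrier_vec m \<noteq> {0\<^sub>v n}" using col by blast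
  then have im: "(\<lambda>v. T *\<^sub>v v) ` carrier_vec m = carrier_vec n"
    using \<rho> intertwiner_image_invariant[OF rep(2,1) T inter] unfolding irreducible_rep_def by blast
  obtain S where S: "S \<in> carrier_mat m n" "T * S = 1\<^sub>m n" "S * T = 1\<^sub>m m"
    by (rule mat_inverse_of_bijective[OF T]) (use ker im in auto)
  have "mat_trace (\<sigma> g) = mat_trace (\<rho> g)" if g: "g \<in> carrier G" for g
  proof -
    have \<rho>g: "\<rho> g \<in> carrier_mat n n" and \<sigma>g: "\<sigma> g \<in> carrier_mat m m"
      using representationD(1)[OF rep(1) g] representationD(1)[OF rep(2) g] .
    have "\<sigma> g = (S * T) * \<sigma> g" using S \<sigma>g by simp
    also have "\<dots> = S * (T * \<sigma> g)" by (rule assoc_mult_mat[OF S(1) T \<sigma>g])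
    also have "T * \<sigma> g = \<rho> g * T" by (rule inter[OF g])
    finally have "\<sigma> g = S * (\<rho> g * T)" .
    then have "mat_trace (\<sigma> g) = mat_trace ((\<rho> g * T) * S)"
      using mat_trace_mult_comm[OF S(1), of "\<rho> g * T"] \<rho>g T by simp
    also have "(\<rho> g * T) * S = \<rho> g" using S T \<rho>g by (simp add: assoc_mult_mat[of _ n n T m])
    finally show ?thesis .
  qed
  then show ?thesis unfolding character_def by auto
qed

lemma (in group) averaged_intertwiner:
  assumes \<rho>: "representation G n \<rho>" and \<sigma>: "representation G m \<sigma>"
    and i: "i < n" and j: "j < m" and h: "h \<in> carrier G"
  defines "T \<equiv> mat n m (\<lambda>(a, b). \<Sum>g\<in>carrier G. \<rho> g $$ (a, i) * \<sigma> (inv g) $$ (j, b))"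
  shows "T * \<sigma> h = \<rho> h * T"
proof (rule eq_matI)
  note \<rho>D = representationD[OF \<rho>] and \<sigma>D = representationD[OF \<sigma>]
  have T: "T \<in> carrier_mat n m" unfolding T_def by simp
  fix a b assume "a < dim_row (\<rho> h * T)" "b < dim_col (\<rho> h * T)"
  then have a: "a < n" and b: "b < m" using \<rho>D(1)[OF h] T by auto
  have "(T * \<sigma> h) $$ (a, b) = (\<Sum>g\<in>carrier G. \<rho> g $$ (a, i) * (\<Sum>c<m. \<sigma> (inv g) $$ (j, c) * \<sigma> h $$ (c, b)))"
    unfolding index_mult_mat_sum[OF T \<sigma>D(1)[OF h] a b] using a
    by (simp add: T_def sum_distrib_left sum_distrib_right mult.assoc sum.swap[of _ "{..<m}"])
  also have "\<dots> = (\<Sum>g\<in>carrier G. \<rho> g $$ (a, i) * \<sigma> (inv g \<otimes> h) $$ (j, b))"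
    using index_mult_mat_sum[OF \<sigma>D(1) \<sigma>D(1)[OF h] j b] \<sigma>D(3) h by (intro sum.cong) auto
  finally have lhs: "(T * \<sigma> h) $$ (a, b) = \<dots>" .
  have "(\<rho> h * T) $$ (a, b) = (\<Sum>g\<in>carrier G. (\<Sum>c<n. \<rho> h $$ (a, c) * \<rho> g $$ (c, i)) * \<sigma> (inv g) $$ (j, b))"
    unfolding index_mult_mat_sum[OF \<rho>D(1)[OF h] T a b] using b
    by (simp add: T_def sum_distrib_left sum_distrib_right mult.assoc sum.swap[of _ "{..<n}"])
  also have "\<dots> = (\<Sum>g\<in>carrier G. \<rho> (h \<otimes> g) $$ (a, i) * \<sigma> (inv (h \<otimes> g) \<otimes> h) $$ (j, b))"
  proof (rule sum.cong[OF refl])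
    fix g assume g: "g \<in> carrier G"
    have "inv (h \<otimes> g) \<otimes> h = inv g" using g h by (simp add: inv_mult_group m_assoc)
    then show "(\<Sum>c<n. \<rho> h $$ (a, c) * \<rho> g $$ (c, i)) * \<sigma> (inv g) $$ (j, b) =
        \<rho> (h \<otimes> g) $$ (a, i) * \<sigma> (inv (h \<otimes> g) \<otimes> h) $$ (j, b)"
      using index_mult_mat_sum[OF \<rho>D(1)[OF h] \<rho>D(1)[OF g] a i] \<rho>D(3)[OF h g] by simp
  qed
  also have "\<dots> = (\<Sum>g\<in>carrier G. \<rho> g $$ (a, i) * \<sigma> (inv g \<otimes> h) $$ (j, b))"
    by (rule sum_translate_left[OF h, of "\<lambda>x. \<rho> x $$ (a, i) * \<sigma> (inv x \<otimes> h) $$ (j, b)"])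
  finally show "(T * \<sigma> h) $$ (a, b) = (\<rho> h * T) $$ (a, b)" using lhs by simp
qed (use representationD(1)[OF \<rho> h] representationD(1)[OF \<sigma> h] in \<open>auto simp: T_def\<close>)

theorem (in group) irreducible_character_eqI:
  assumes \<rho>: "irreducible_rep G n \<rho>" and \<sigma>: "irreducible_rep G m \<sigma>"
    and nz: "(\<Sum>g\<in>carrier G. character G \<rho> g * character G \<sigma> (inv g)) \<noteq> 0"
  shows "character G \<sigma> = character G \<rho>"
proof -
  have rep: "representation G n \<rho>" "representation G m \<sigma>"
    using \<rho> \<sigma> unfolding irreducible_rep_def by auto
  note \<rho>D = representationD[OF rep(1)] and \<sigma>D = representationD[OF rep(2)]
  define T where "T i j = mat n m (\<lambda>(a, b). \<Sum>g\<in>carrier G. \<rho> g $$ (a, i) * \<sigma> (inv g) $$ (j, b))" for i j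
  have "(\<Sum>i<n. \<Sum>j<m. T i j $$ (i, j)) =
      (\<Sum>i<n. \<Sum>j<m. \<Sum>g\<in>carrier G. \<rho> g $$ (i, i) * \<sigma> (inv g) $$ (j, j))"
    unfolding T_def by simp
  also have "\<dots> = (\<Sum>g\<in>carrier G. \<Sum>i<n. \<Sum>j<m. \<rho> g $$ (i, i) * \<sigma> (inv g) $$ (j, j))"
    by (subst sum.swap) (simp add: sum.swap[of _ "{..<m}"])
  also have "\<dots> = (\<Sum>g\<in>carrier G. (\<Sum>i<n. \<rho> g $$ (i, i)) * (\<Sum>j<m. \<sigma> (inv g) $$ (j, j)))"
    by (simp add: sum_product)
  also have "\<dots> = (\<Sum>g\<in>carrier G. character G \<rho> g * character G \<sigma> (inv g))"
  proof (rule sum.cong[OF refl])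
    fix g assume g: "g \<in> carrier G"
    then have "dim_row (\<rho> g) = n" "dim_row (\<sigma> (inv g)) = m" using \<rho>D(1)[OF g] \<sigma>D(1)[of "inv g"] by auto
    then show "(\<Sum>i<n. \<rho> g $$ (i, i)) * (\<Sum>j<m. \<sigma> (inv g) $$ (j, j)) =
        character G \<rho> g * character G \<sigma> (inv g)"
      using g by (simp add: character_def mat_trace_def)
  qed
  finally have "(\<Sum>i<n. \<Sum>j<m. T i j $$ (i, j)) \<noteq> 0" using nz by simp
  then have "\<exists>i<n. \<exists>j<m. T i j $$ (i, j) \<noteq> 0" by (meson lessThan_iff sum.neutral)
  then obtain i j where ij: "i < n" "j < m" "T i j $$ (i, j) \<noteq> 0" by blast
  have "T i j \<noteq> 0\<^sub>m n m" using ij by auto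
  moreover have "T i j * \<sigma> h = \<rho> h * T i j" if "h \<in> carrier G" for h
    unfolding T_def by (rule averaged_intertwiner[OF rep ij(1,2) that])
  ultimately show ?thesis by (intro schur_character_eq[OF \<rho> \<sigma>]) (auto simp: T_def)
qed

section \<open>Frobenius groups with abelian kernel and complement\<close>

lemma conj_set_eq: "g <#\<^bsub>G\<^esub> H #>\<^bsub>G\<^esub> inv\<^bsub>G\<^esub> g = {g \<otimes>\<^bsub>G\<^esub> a \<otimes>\<^bsub>G\<^esub> inv\<^bsub>G\<^esub> g | a. a \<in> H}"
  unfolding l_coset_def r_coset_def by auto

locale abelian_frobenius = group G for G (structure) +
  fixes H
  assumes finite_carrier: "finite (carrier G)"
    and complement: "frobenius_complement G H"
    and kernel_comm: "comm_group (G\<lparr>carrier := frobenius_kernel G H\<rparr>)"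
    and complement_comm: "comm_group (G\<lparr>carrier := H\<rparr>)"
begin

abbreviation K where "K \<equiv> frobenius_kernel G H"

lemma complement_subgroup: "subgroup H G"
  and complement_neq_carrier: "H \<noteq> carrier G"
  and complement_nontrivial: "H \<noteq> {\<one>}"
  and complement_conj_disjoint:
    "\<And>g. g \<in> carrier G \<Longrightarrow> g \<notin> H \<Longrightarrow> H \<inter> {g \<otimes> a \<otimes> inv g | a. a \<in> H} = {\<one>}"
  using complement unfolding frobenius_complement_def by (auto simp: conj_set_eq)

sublocale H: subgroup H G by (rule complement_subgroup)

lemma complement_comm_mult: "a \<in> H \<Longrightarrow> b \<in> H \<Longrightarrow> a \<otimes> b = b \<otimes> a"
  using comm_monoid.m_comm[OF comm_group.axioms(1)[OF complement_comm], of a b] by simp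

lemma complement_conj_fixed: "c \<in> H \<Longrightarrow> a \<in> H \<Longrightarrow> c \<otimes> a \<otimes> inv c = a"
  using complement_comm_mult[of c a] by (simp add: m_assoc H.mem_carrier)

lemma mem_complement_if_conj_mem:
  assumes g: "g \<in> carrier G" and a: "a \<in> H" "a \<noteq> \<one>" and c: "g \<otimes> a \<otimes> inv g \<in> H"
  shows "g \<in> H"
proof (rule ccontr)
  assume "g \<notin> H"
  then have "g \<otimes> a \<otimes> inv g = \<one>" using complement_conj_disjoint[OF g] c a by blast
  then show False using a g conj_eq_one_iff H.mem_carrier by blast
qed

lemma kernel_iff: "x \<in> K \<longleftrightarrow> x = \<one> \<or> (x \<in> carrier G \<and> (\<forall>g\<in>carrier G. \<forall>a\<in>H. x \<noteq> g \<otimes> a \<otimes> inv g))"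
  unfolding frobenius_kernel_def conj_set_eq by blast

lemma kernel_subgroup: "subgroup K G"
proof -
  interpret K: comm_group "G\<lparr>carrier := K\<rparr>" by (rule kernel_comm)
  have "K \<subseteq> carrier G" using kernel_iff by auto
  moreover have "inv x = inv\<^bsub>G\<lparr>carrier := K\<rparr>\<^esub> x" if "x \<in> K" for x
    using that calculation K.inv_closed K.l_inv by (intro inv_equality) (auto simp: subsetD)
  ultimately show ?thesis
    by (intro subgroupI) (use K.m_closed K.inv_closed kernel_iff in auto)
qed

sublocale K: subgroup K G by (rule kernel_subgroup)

lemma kernel_comm_mult: "x \<in> K \<Longrightarrow> y \<in> K \<Longrightarrow> x \<otimes> y = y \<otimes> x"
  using comm_monoid.m_comm[OF comm_group.axioms(1)[OF kernel_comm], of x y] by simp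

lemma kernel_conj_fixed: "y \<in> K \<Longrightarrow> z \<in> K \<Longrightarrow> y \<otimes> z \<otimes> inv y = z"
  using kernel_comm_mult[of y z] by (simp add: m_assoc K.mem_carrier)

lemma kernel_normal:
  assumes x: "x \<in> K" and g: "g \<in> carrier G"
  shows "g \<otimes> x \<otimes> inv g \<in> K"
proof (cases "x = \<one>")
  case True
  have "g \<otimes> x \<otimes> inv g = \<one>" using g by (simp add: True)
  then show ?thesis using K.one_closed by (simp only:)
next
  case False
  have not_conj: "\<forall>g\<in>carrier G. \<forall>a\<in>H. x \<noteq> g \<otimes> a \<otimes> inv g" using x False kernel_iff by blast
  have "\<forall>g'\<in>carrier G. \<forall>a\<in>H. g \<otimes> x \<otimes> inv g \<noteq> g' \<otimes> a \<otimes> inv g'"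
  proof (intro ballI notI)
    fix g' a assume g': "g' \<in> carrier G" and a: "a \<in> H"
    assume e: "g \<otimes> x \<otimes> inv g = g' \<otimes> a \<otimes> inv g'"
    have "x = inv g \<otimes> (g \<otimes> x \<otimes> inv g) \<otimes> g"
      using g K.mem_carrier[OF x] by (simp add: m_assoc inv_mult_cancel_left)
    also have "\<dots> = inv g \<otimes> (g' \<otimes> a \<otimes> inv g') \<otimes> g" by (simp only: e)
    also have "\<dots> = (inv g \<otimes> g') \<otimes> a \<otimes> inv (inv g \<otimes> g')"
      using g g' H.mem_carrier[OF a] by (simp add: m_assoc inv_mult_group)
    finally have "x = (inv g \<otimes> g') \<otimes> a \<otimes> inv (inv g \<otimes> g')" .
    moreover have "x \<noteq> (inv g \<otimes> g') \<otimes> a \<otimes> inv (inv g \<otimes> g')"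
      using not_conj m_closed[OF inv_closed[OF g] g'] a by blast
    ultimately show False by contradiction
  qed
  moreover have "g \<otimes> x \<otimes> inv g \<in> carrier G" using g K.mem_carrier[OF x] by simp
  ultimately show ?thesis by (subst kernel_iff) blast
qed

lemma kernel_inter_complement:
  assumes "x \<in> K" "x \<in> H"
  shows "x = \<one>"
proof (rule ccontr)
  assume "x \<noteq> \<one>"
  then have "\<forall>g\<in>carrier G. \<forall>a\<in>H. x \<noteq> g \<otimes> a \<otimes> inv g" using kernel_iff assms(1) by blast
  then have "x \<noteq> \<one> \<otimes> x \<otimes> inv \<one>" using assms(2) by blast
  then show False using H.mem_carrier[OF assms(2)] by simp
qed

lemma finite_complement: "finite H" using finite_carrier H.subset finite_subset by blast
lemma finite_kernel: "finite K" using finite_carrier K.subset finite_subset by blast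

lemma conj_fibre:
  assumes g: "g \<in> carrier G" and a: "a \<in> H" "a \<noteq> \<one>"
  shows "{p \<in> carrier G \<times> (H - {\<one>}). fst p \<otimes> snd p \<otimes> inv (fst p) = g \<otimes> a \<otimes> inv g} =
    (\<lambda>c. (g \<otimes> c, a)) ` H"
proof (intro equalityI subsetI)
  fix p assume "p \<in> (\<lambda>c. (g \<otimes> c, a)) ` H"
  then obtain c where c: "c \<in> H" "p = (g \<otimes> c, a)" by blast
  have "fst p \<otimes> snd p \<otimes> inv (fst p) = g \<otimes> (c \<otimes> a \<otimes> inv c) \<otimes> inv g"
    using g c H.mem_carrier a(1) by (simp add: inv_mult_group m_assoc)
  then show "p \<in> {p \<in> carrier G \<times> (H - {\<one>}). fst p \<otimes> snd p \<otimes> inv (fst p) = g \<otimes> a \<otimes> inv g}"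
    using complement_conj_fixed[OF c(1) a(1)] c g a H.mem_carrier by auto
next
  fix p assume "p \<in> {p \<in> carrier G \<times> (H - {\<one>}). fst p \<otimes> snd p \<otimes> inv (fst p) = g \<otimes> a \<otimes> inv g}"
  then obtain g' a' where p: "p = (g', a')" "g' \<in> carrier G" "a' \<in> H" "a' \<noteq> \<one>"
    and e: "g' \<otimes> a' \<otimes> inv g' = g \<otimes> a \<otimes> inv g" by (cases p) auto
  define c where "c = inv g \<otimes> g'"
  have c: "c \<in> carrier G" unfolding c_def using g p(2) by simp
  have "c \<otimes> a' \<otimes> inv c = inv g \<otimes> (g' \<otimes> a' \<otimes> inv g') \<otimes> g"
    unfolding c_def using g p(2) H.mem_carrier[OF p(3)] by (simp add: inv_mult_group m_assoc)
  also have "\<dots> = a" using g H.mem_carrier[OF a(1)] by (simp add: e m_assoc inv_mult_cancel_left)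
  finally have ca: "c \<otimes> a' \<otimes> inv c = a" .
  then have cH: "c \<in> H" using mem_complement_if_conj_mem[OF c p(3,4)] a(1) by simp
  have "g' = g \<otimes> c" unfolding c_def using g p(2) by (simp add: mult_inv_cancel_left)
  moreover have "a' = a" using complement_conj_fixed[OF cH p(3)] ca by simp
  ultimately show "p \<in> (\<lambda>c. (g \<otimes> c, a)) ` H" using p(1) cH by blast
qed

text \<open>Frobenius' count: the conjugates of non-identity elements of \<open>H\<close> are exactly the
  elements outside \<open>K\<close>, and each is hit by \<open>|H|\<close> pairs \<open>(g, a)\<close>.\<close>

lemma card_kernel_mult_card_complement: "card K * card H = card (carrier G)"
proof -
  define U where "U = carrier G - K"
  define A where "A = carrier G \<times> (H - {\<one>})"
  define fibre where "fibre u = {p \<in> A. fst p \<otimes> snd p \<otimes> inv (fst p) = u}" for u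
  have A_eq: "A = (\<Union>u\<in>U. fibre u)"
  proof (intro equalityI subsetI)
    fix p assume p: "p \<in> A"
    then obtain g a where ga: "p = (g, a)" "g \<in> carrier G" "a \<in> H" "a \<noteq> \<one>" unfolding A_def by auto
    have "g \<otimes> a \<otimes> inv g \<noteq> \<one>" using ga conj_eq_one_iff H.mem_carrier by blast
    then have "g \<otimes> a \<otimes> inv g \<notin> K" using kernel_iff ga by blast
    then have "g \<otimes> a \<otimes> inv g \<in> U" unfolding U_def using ga H.mem_carrier by simp
    then show "p \<in> (\<Union>u\<in>U. fibre u)" unfolding fibre_def using p ga(1) by auto
  qed (auto simp: fibre_def)
  have card_fibre: "card (fibre u) = card H" if u: "u \<in> U" for u
  proof -
    have "u \<noteq> \<one>" using u K.one_closed unfolding U_def by auto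
    then obtain g a where ga: "g \<in> carrier G" "a \<in> H" "u = g \<otimes> a \<otimes> inv g"
      using u kernel_iff unfolding U_def by blast
    then have "a \<noteq> \<one>" using \<open>u \<noteq> \<one>\<close> by auto
    then have "fibre u = (\<lambda>c. (g \<otimes> c, a)) ` H"
      unfolding fibre_def A_def ga(3) by (rule conj_fibre[OF ga(1,2)])
    moreover have "inj_on (\<lambda>c. (g \<otimes> c, a)) H" using ga(1) H.mem_carrier by (intro inj_onI) auto
    ultimately show ?thesis by (simp add: card_image)
  qed
  have "card A = (\<Sum>u\<in>U. card (fibre u))"
    unfolding A_eq using finite_carrier finite_complement
    by (intro card_UN_disjoint) (auto simp: U_def fibre_def A_def)
  then have "card (carrier G) * (card H - 1) = (card (carrier G) - card K) * card H"
    using card_fibre finite_complement finite_kernel K.subset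
    by (simp add: A_def U_def card_cartesian_product card_Diff_singleton card_Diff_subset)
  moreover have "card K \<le> card (carrier G)" using K.subset finite_carrier card_mono by blast
  moreover have "1 \<le> card H" using H.one_closed finite_complement by (metis card_0_eq empty_iff less_one not_le)
  ultimately have "card (carrier G) * card H - card (carrier G) = card (carrier G) * card H - card K * card H"
    by (simp add: algebra_simps diff_mult_distrib diff_mult_distrib2)
  moreover have "card K * card H \<le> card (carrier G) * card H" using \<open>card K \<le> card (carrier G)\<close> by simp
  moreover have "card (carrier G) \<le> card (carrier G) * card H" using \<open>1 \<le> card H\<close> by simp
  ultimately show ?thesis by linarith
qed

lemma kernel_complement_decomp_unique:
  assumes x: "x \<in> K" "x' \<in> K" and a: "a \<in> H" "a' \<in> H" and e: "x \<otimes> a = x' \<otimes> a'"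
  shows "x = x' \<and> a = a'"
proof -
  have c: "x \<in> carrier G" "x' \<in> carrier G" "a \<in> carrier G" "a' \<in> carrier G"
    using x a K.mem_carrier H.mem_carrier by auto
  have "inv x' \<otimes> (x \<otimes> a) = a'" using c by (simp add: e inv_mult_cancel_left)
  then have "inv x' \<otimes> x = a' \<otimes> inv a" using c by (simp add: inv_solve_right m_assoc)
  then have "inv x' \<otimes> x = \<one>"
    using kernel_inter_complement x a K.m_closed K.m_inv_closed H.m_closed H.m_inv_closed by metis
  then show ?thesis using e c by (simp add: inv_solve_left')
qed

lemma kernel_complement_decomp:
  assumes g: "g \<in> carrier G"
  obtains x a where "x \<in> K" "a \<in> H" "g = x \<otimes> a"
proof -
  let ?m = "\<lambda>p. fst p \<otimes> snd p"
  have "inj_on ?m (K \<times> H)"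
    using kernel_complement_decomp_unique by (intro inj_onI) (auto simp: prod_eq_iff)
  then have "card (?m ` (K \<times> H)) = card (carrier G)"
    using card_kernel_mult_card_complement by (simp add: card_image card_cartesian_product)
  moreover have "?m ` (K \<times> H) \<subseteq> carrier G" using K.subset H.subset by auto
  ultimately have "?m ` (K \<times> H) = carrier G" using card_subset_eq[OF finite_carrier] by blast
  then show ?thesis using g that by force
qed

definition proj :: "'a \<Rightarrow> 'a" where
  "proj g = (THE a. a \<in> H \<and> (\<exists>x\<in>K. g = x \<otimes> a))"

lemma proj_eq: "x \<in> K \<Longrightarrow> a \<in> H \<Longrightarrow> proj (x \<otimes> a) = a"
  unfolding proj_def by (rule the_equality) (use kernel_complement_decomp_unique in blast)+

lemma proj_in_complement: "g \<in> carrier G \<Longrightarrow> proj g \<in> H"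
  by (metis kernel_complement_decomp proj_eq)

lemma mult_inv_proj_in_kernel: "g \<in> carrier G \<Longrightarrow> g \<otimes> inv (proj g) \<in> K"
  by (rule kernel_complement_decomp)
    (auto simp: proj_eq m_assoc K.mem_carrier H.mem_carrier)

lemma proj_decomp: "g \<in> carrier G \<Longrightarrow> g = (g \<otimes> inv (proj g)) \<otimes> proj g"
  using proj_in_complement H.mem_carrier by (simp add: m_assoc)

lemma proj_complement: "a \<in> H \<Longrightarrow> proj a = a"
  using proj_eq[OF K.one_closed] H.mem_carrier by simp

lemma proj_kernel: "x \<in> K \<Longrightarrow> proj x = \<one>"
  using proj_eq[OF _ H.one_closed] K.mem_carrier by simp

lemma proj_eq_one_iff: "g \<in> carrier G \<Longrightarrow> proj g = \<one> \<longleftrightarrow> g \<in> K"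
  using mult_inv_proj_in_kernel proj_kernel by (metis inv_one r_one)

lemma proj_mult:
  assumes g: "g \<in> carrier G" and h: "h \<in> carrier G"
  shows "proj (g \<otimes> h) = proj g \<otimes> proj h"
proof -
  define x a y b where "x = g \<otimes> inv (proj g)" "a = proj g" "y = h \<otimes> inv (proj h)" "b = proj h"
  have xa: "x \<in> K" "a \<in> H" "y \<in> K" "b \<in> H"
    unfolding x_a_y_b_def using mult_inv_proj_in_kernel proj_in_complement g h by auto
  then have c: "x \<in> carrier G" "a \<in> carrier G" "y \<in> carrier G" "b \<in> carrier G"
    using K.mem_carrier H.mem_carrier by auto
  have "g \<otimes> h = (x \<otimes> a) \<otimes> (y \<otimes> b)" unfolding x_a_y_b_def using proj_decomp g h by simp
  also have "\<dots> = (x \<otimes> (a \<otimes> y \<otimes> inv a)) \<otimes> (a \<otimes> b)" using c by (simp add: m_assoc inv_mult_cancel_left)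
  finally show ?thesis
    using proj_eq K.m_closed[OF xa(1) kernel_normal[OF xa(3) c(2)]] H.m_closed[OF xa(2,4)]
    unfolding x_a_y_b_def by simp
qed

lemma conj_via_decomp:
  assumes g: "g \<in> carrier G" and z: "z \<in> carrier G"
  shows "g \<otimes> z \<otimes> inv g = (g \<otimes> inv (proj g)) \<otimes> (proj g \<otimes> z \<otimes> inv (proj g)) \<otimes> inv (g \<otimes> inv (proj g))"
  using g z proj_in_complement[OF g] H.mem_carrier
  by (simp add: m_assoc inv_mult_group inv_mult_cancel_left)

lemma fixed_point_free:
  assumes x: "x \<in> K" "x \<noteq> \<one>" and a: "a \<in> H" and e: "a \<otimes> x \<otimes> inv a = x"
  shows "a = \<one>"
proof (rule ccontr)
  assume "a \<noteq> \<one>"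
  have c: "x \<in> carrier G" "a \<in> carrier G" using x a K.mem_carrier H.mem_carrier by auto
  have "a \<otimes> x = x \<otimes> a" using inv_solve_right'[of x "a \<otimes> x" a] e c by simp
  then have "x \<otimes> a \<otimes> inv x = a" using inv_solve_right'[of a "x \<otimes> a" x] c by simp
  then have "x \<in> H" using mem_complement_if_conj_mem[OF c(1) a \<open>a \<noteq> \<one>\<close>] a by simp
  then show False using kernel_inter_complement x by blast
qed

lemma complement_conj_inj:
  assumes x: "x \<in> K" "x \<noteq> \<one>" and ab: "a \<in> H" "b \<in> H" and e: "a \<otimes> x \<otimes> inv a = b \<otimes> x \<otimes> inv b"
  shows "a = b"
proof -
  have c: "x \<in> carrier G" "a \<in> carrier G" "b \<in> carrier G"
    using x ab K.mem_carrier H.mem_carrier by auto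
  have "(inv b \<otimes> a) \<otimes> x \<otimes> inv (inv b \<otimes> a) = inv b \<otimes> (a \<otimes> x \<otimes> inv a) \<otimes> b"
    using c by (simp add: inv_mult_group m_assoc)
  also have "\<dots> = inv b \<otimes> (b \<otimes> x \<otimes> inv b) \<otimes> b" by (simp only: e)
  also have "\<dots> = x" using c by (simp add: m_assoc inv_mult_cancel_left)
  finally have "inv b \<otimes> a = \<one>" using fixed_point_free[OF x] ab H.m_closed H.m_inv_closed by blast
  then show ?thesis using c by (simp add: inv_solve_left')
qed

lemma kernel_conj_inj:
  assumes a: "a \<in> H" "a \<noteq> \<one>" and xy: "x \<in> K" "y \<in> K" and e: "x \<otimes> a \<otimes> inv x = y \<otimes> a \<otimes> inv y"
  shows "x = y"
proof -
  have c: "a \<in> carrier G" "x \<in> carrier G" "y \<in> carrier G"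
    using a xy K.mem_carrier H.mem_carrier by auto
  have "(inv y \<otimes> x) \<otimes> a \<otimes> inv (inv y \<otimes> x) = inv y \<otimes> (x \<otimes> a \<otimes> inv x) \<otimes> y"
    using c by (simp add: inv_mult_group m_assoc)
  also have "\<dots> = inv y \<otimes> (y \<otimes> a \<otimes> inv y) \<otimes> y" by (simp only: e)
  also have "\<dots> = a" using c by (simp add: m_assoc inv_mult_cancel_left)
  finally have "inv y \<otimes> x \<in> H" using mem_complement_if_conj_mem[of "inv y \<otimes> x", OF _ a] a c by simp
  then have "inv y \<otimes> x = \<one>" using kernel_inter_complement xy K.m_closed K.m_inv_closed by blast
  then show ?thesis using c by (simp add: inv_solve_left')
qed

lemma conj_class_kernel:
  assumes x: "x \<in> K"
  shows "conj_class G x = (\<lambda>a. a \<otimes> x \<otimes> inv a) ` H"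
proof (intro equalityI subsetI)
  fix z assume "z \<in> conj_class G x"
  then obtain g where g: "g \<in> carrier G" "z = g \<otimes> x \<otimes> inv g" by (rule conj_classE)
  have "proj g \<otimes> x \<otimes> inv (proj g) \<in> K"
    using kernel_normal[OF x] proj_in_complement[OF g(1)] H.mem_carrier by blast
  then have "z = proj g \<otimes> x \<otimes> inv (proj g)"
    using g conj_via_decomp[OF g(1) K.mem_carrier[OF x]]
      kernel_conj_fixed[OF mult_inv_proj_in_kernel[OF g(1)]] by simp
  then show "z \<in> (\<lambda>a. a \<otimes> x \<otimes> inv a) ` H" using proj_in_complement[OF g(1)] by blast
qed (auto intro: conj_classI[OF H.mem_carrier])

lemma conj_class_complement:
  assumes a: "a \<in> H"
  shows "conj_class G a = (\<lambda>y. y \<otimes> a \<otimes> inv y) ` K"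
proof (intro equalityI subsetI)
  fix z assume "z \<in> conj_class G a"
  then obtain g where g: "g \<in> carrier G" "z = g \<otimes> a \<otimes> inv g" by (rule conj_classE)
  then have "z = (g \<otimes> inv (proj g)) \<otimes> a \<otimes> inv (g \<otimes> inv (proj g))"
    using conj_via_decomp[OF g(1) H.mem_carrier[OF a]] complement_conj_fixed[OF proj_in_complement[OF g(1)] a]
    by simp
  then show "z \<in> (\<lambda>y. y \<otimes> a \<otimes> inv y) ` K" using mult_inv_proj_in_kernel[OF g(1)] by blast
qed (auto intro: conj_classI[OF K.mem_carrier])

lemma conj_class_kernel_subset: "x \<in> K \<Longrightarrow> conj_class G x \<subseteq> K"
  using conj_class_kernel kernel_normal H.mem_carrier by auto

lemma card_conj_class_kernel: "x \<in> K \<Longrightarrow> x \<noteq> \<one> \<Longrightarrow> card (conj_class G x) = card H"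
  using conj_class_kernel complement_conj_inj by (metis (mono_tags, lifting) card_image inj_onI)

lemma card_conj_class_outside_kernel:
  assumes g: "g \<in> carrier G" "g \<notin> K"
  shows "card (conj_class G g) = card K"
proof -
  obtain y a where ya: "y \<in> carrier G" "a \<in> H" "g = y \<otimes> a \<otimes> inv y"
    using g kernel_iff by blast
  then have "a \<noteq> \<one>" using g K.one_closed by auto
  have "card (conj_class G a) = card K"
    using conj_class_complement[OF ya(2)] kernel_conj_inj[OF ya(2) \<open>a \<noteq> \<one>\<close>]
    by (metis (mono_tags, lifting) card_image inj_onI)
  then show ?thesis using conj_class_conj[OF ya(1) H.mem_carrier[OF ya(2)]] ya(3) by simp
qed

lemma card_complement_ge_2: "2 \<le> card H"
proof -
  obtain a where a: "a \<in> H" "a \<noteq> \<one>" using complement_nontrivial H.one_closed by blast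
  then have "{\<one>, a} \<subseteq> H" using H.one_closed by blast
  then have "card {\<one>, a} \<le> card H" by (rule card_mono[OF finite_complement])
  then show ?thesis using a(2) by simp
qed

lemma card_kernel_ge_2: "2 \<le> card K"
proof (rule ccontr)
  assume "\<not> 2 \<le> card K"
  moreover have "card K \<noteq> 0" using K.one_closed finite_kernel card_0_eq by blast
  ultimately have "card K = 1" by linarith
  then have "card H = card (carrier G)" using card_kernel_mult_card_complement by simp
  then have "H = carrier G" using card_subset_eq[OF finite_carrier H.subset] by simp
  then show False using complement_neq_carrier by simp
qed

lemma card_complement_less_card_kernel: "card H < card K"
proof -
  have "K \<noteq> {\<one>}"
  proof
    assume "K = {\<one>}"
    then show False using card_kernel_ge_2 by simp
  qed
  then obtain x where x: "x \<in> K" "x \<noteq> \<one>" using K.one_closed by blast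
  have "\<one> \<notin> conj_class G x"
  proof
    assume "\<one> \<in> conj_class G x"
    then obtain g where "g \<in> carrier G" "\<one> = g \<otimes> x \<otimes> inv g" by (rule conj_classE)
    then show False using x conj_eq_one_iff K.mem_carrier by metis
  qed
  then have "conj_class G x \<subseteq> K - {\<one>}" using conj_class_kernel_subset[OF x(1)] by blast
  then have "card (conj_class G x) \<le> card (K - {\<one>})" using finite_kernel by (intro card_mono) auto
  then have "card H \<le> card (K - {\<one>})" using card_conj_class_kernel[OF x] by simp
  then show ?thesis using K.one_closed finite_kernel card_kernel_ge_2 by (simp add: card_Diff_singleton)
qed

end

section \<open>The irreducible characters\<close>

lemma sum_single_nonzero:
  assumes "finite S" "s \<in> S" "\<And>t. t \<in> S \<Longrightarrow> t \<noteq> s \<Longrightarrow> f t = 0"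
  shows "sum f S = (f s :: 'b :: comm_monoid_add)"
proof -
  have "sum f S = f s + sum f (S - {s})" using assms(1,2) by (rule sum.remove)
  also have "sum f (S - {s}) = 0" using assms(3) by (intro sum.neutral) auto
  finally show ?thesis by simp
qed

lemma invariant_subspace_sum_closed:
  assumes W: "invariant_subspace G n \<rho> W" and S: "finite S" and f: "\<And>x. x \<in> S \<Longrightarrow> f x \<in> W"
  shows "vec n (\<lambda>l. \<Sum>x\<in>S. f x $ l) \<in> W"
  using S f
proof (induction S rule: finite_induct)
  case empty
  have "vec n (\<lambda>l. \<Sum>x\<in>{}. f x $ l) = 0\<^sub>v n" by (intro eq_vecI) auto
  then show ?case using W unfolding invariant_subspace_def by simp
next
  case (insert y S)
  have "f y \<in> W" "vec n (\<lambda>l. \<Sum>x\<in>S. f x $ l) \<in> W" using insert by simp_all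
  moreover have "vec n (\<lambda>l. \<Sum>x\<in>insert y S. f x $ l) = f y + vec n (\<lambda>l. \<Sum>x\<in>S. f x $ l)"
    using insert \<open>f y \<in> W\<close> W unfolding invariant_subspace_def by (intro eq_vecI) auto
  ultimately show ?case using W unfolding invariant_subspace_def by simp
qed

context abelian_frobenius begin

lemma finite_comm_group_complement: "finite_comm_group (G\<lparr>carrier := H\<rparr>)"
  unfolding finite_comm_group_def finite_comm_group_axioms_def
  using complement_comm finite_complement by simp

lemma finite_comm_group_kernel: "finite_comm_group (G\<lparr>carrier := K\<rparr>)"
  unfolding finite_comm_group_def finite_comm_group_axioms_def
  using kernel_comm finite_kernel by simp

abbreviation "H_chars \<equiv> lin_chars (G\<lparr>carrier := H\<rparr>)"
abbreviation "K_chars \<equiv> lin_chars (G\<lparr>carrier := K\<rparr>)"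
abbreviation "K_principal \<equiv> principal_char (G\<lparr>carrier := K\<rparr>)"

lemma H_charsD:
  assumes "\<mu> \<in> H_chars"
  shows "\<mu> \<one> = 1" "\<And>a b. a \<in> H \<Longrightarrow> b \<in> H \<Longrightarrow> \<mu> (a \<otimes> b) = \<mu> a * \<mu> b" "\<And>x. x \<notin> H \<Longrightarrow> \<mu> x = 0"
  using assms unfolding lin_chars_def by auto

lemma K_charsD:
  assumes "\<psi> \<in> K_chars"
  shows "\<psi> \<one> = 1" "\<And>x y. x \<in> K \<Longrightarrow> y \<in> K \<Longrightarrow> \<psi> (x \<otimes> y) = \<psi> x * \<psi> y" "\<And>x. x \<notin> K \<Longrightarrow> \<psi> x = 0"
  using assms unfolding lin_chars_def by auto

definition lift_rep :: "('a \<Rightarrow> complex) \<Rightarrow> 'a \<Rightarrow> complex mat" where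
  "lift_rep \<mu> g = mat 1 1 (\<lambda>_. \<mu> (proj g))"

definition lift_char :: "('a \<Rightarrow> complex) \<Rightarrow> 'a \<Rightarrow> complex" where
  "lift_char \<mu> g = (if g \<in> carrier G then \<mu> (proj g) else 0)"

lemma lift_rep_irreducible:
  assumes \<mu>: "\<mu> \<in> H_chars"
  shows "irreducible_rep G 1 (lift_rep \<mu>)"
proof (rule irreducible_rep_dim_one)
  have "\<mu> (proj (x \<otimes> y)) = \<mu> (proj x) * \<mu> (proj y)" if "x \<in> carrier G" "y \<in> carrier G" for x y
    using proj_mult[OF that] H_charsD(2)[OF \<mu>] proj_in_complement that by simp
  moreover have "mat 1 1 (\<lambda>_. a) * mat 1 1 (\<lambda>_. b) = mat 1 1 (\<lambda>_. a * b)" for a b :: complex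
    by (rule eq_matI) (auto simp: scalar_prod_def)
  ultimately show "representation G 1 (lift_rep \<mu>)"
    unfolding representation_def lift_rep_def
    using H_charsD(1)[OF \<mu>] proj_kernel[OF K.one_closed] by (auto intro!: eq_matI)
qed

lemma character_lift_rep: "character G (lift_rep \<mu>) = lift_char \<mu>"
  by (rule ext) (simp add: character_def lift_char_def lift_rep_def mat_trace_def)

lemma lift_char_Irr: "\<mu> \<in> H_chars \<Longrightarrow> lift_char \<mu> \<in> Irr G"
  unfolding Irr_def using lift_rep_irreducible character_lift_rep
  by (intro CollectI exI[of _ 1] exI[of _ "lift_rep \<mu>"]) simp

lemma lift_char_kernel: "\<mu> \<in> H_chars \<Longrightarrow> x \<in> K \<Longrightarrow> lift_char \<mu> x = 1"
  unfolding lift_char_def using K.mem_carrier proj_kernel H_charsD(1) by simp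

lemma lift_char_complement: "\<mu> \<in> H_chars \<Longrightarrow> a \<in> H \<Longrightarrow> lift_char \<mu> a = \<mu> a"
  unfolding lift_char_def using proj_complement H.mem_carrier by simp

lemma lift_char_inj: "inj_on lift_char H_chars"
proof (rule inj_onI)
  fix \<mu> \<mu>' assume \<mu>: "\<mu> \<in> H_chars" "\<mu>' \<in> H_chars" and e: "lift_char \<mu> = lift_char \<mu>'"
  show "\<mu> = \<mu>'"
  proof
    fix x show "\<mu> x = \<mu>' x"
      using lift_char_complement[OF \<mu>(1), of x] lift_char_complement[OF \<mu>(2), of x] e
        H_charsD(3)[OF \<mu>(1)] H_charsD(3)[OF \<mu>(2)] by (cases "x \<in> H") auto
  qed
qed

definition conj_char :: "'a \<Rightarrow> ('a \<Rightarrow> complex) \<Rightarrow> 'a \<Rightarrow> complex" where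
  "conj_char a \<psi> = (\<lambda>x. if x \<in> K then \<psi> (inv a \<otimes> x \<otimes> a) else 0)"

lemma inv_conj_mem_kernel_iff:
  assumes a: "a \<in> carrier G" and x: "x \<in> carrier G"
  shows "inv a \<otimes> x \<otimes> a \<in> K \<longleftrightarrow> x \<in> K"
proof
  assume "inv a \<otimes> x \<otimes> a \<in> K"
  then have "a \<otimes> (inv a \<otimes> x \<otimes> a) \<otimes> inv a \<in> K" using kernel_normal a by blast
  then show "x \<in> K" using a x by (simp add: m_assoc mult_inv_cancel_left)
qed (use kernel_normal[of x "inv a"] a in simp)

lemma conj_char_K_chars:
  assumes a: "a \<in> H" and \<psi>: "\<psi> \<in> K_chars"
  shows "conj_char a \<psi> \<in> K_chars"
  unfolding lin_chars_def
proof (simp, intro conjI ballI allI impI)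
  have ac: "a \<in> carrier G" using a H.mem_carrier by blast
  show "conj_char a \<psi> \<one> = 1" unfolding conj_char_def using K.one_closed ac K_charsD(1)[OF \<psi>] by simp
  fix x y assume x: "x \<in> K" and y: "y \<in> K"
  have "inv a \<otimes> (x \<otimes> y) \<otimes> a = (inv a \<otimes> x \<otimes> a) \<otimes> (inv a \<otimes> y \<otimes> a)"
    using x y ac K.mem_carrier by (simp add: m_assoc mult_inv_cancel_left)
  moreover have "inv a \<otimes> x \<otimes> a \<in> K" "inv a \<otimes> y \<otimes> a \<in> K"
    using inv_conj_mem_kernel_iff ac x y K.mem_carrier by auto
  ultimately show "conj_char a \<psi> (x \<otimes> y) = conj_char a \<psi> x * conj_char a \<psi> y"
    unfolding conj_char_def using x y K.m_closed K_charsD(2)[OF \<psi>] by simp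
qed (simp add: conj_char_def)

lemma conj_char_mult:
  assumes b: "b \<in> H" and c: "c \<in> H"
  shows "conj_char b (conj_char c \<psi>) = conj_char (b \<otimes> c) \<psi>"
proof
  fix x
  have bc: "b \<in> carrier G" "c \<in> carrier G" using b c H.mem_carrier by auto
  show "conj_char b (conj_char c \<psi>) x = conj_char (b \<otimes> c) \<psi> x"
  proof (cases "x \<in> K")
    case True
    then have "inv b \<otimes> x \<otimes> b \<in> K" using inv_conj_mem_kernel_iff bc K.mem_carrier by blast
    moreover have "inv c \<otimes> (inv b \<otimes> x \<otimes> b) \<otimes> c = inv (b \<otimes> c) \<otimes> x \<otimes> (b \<otimes> c)"
      using bc True K.mem_carrier by (simp add: inv_mult_group m_assoc)
    ultimately show ?thesis unfolding conj_char_def using True by simp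
  qed (simp add: conj_char_def)
qed

lemma conj_char_one: "\<psi> \<in> K_chars \<Longrightarrow> conj_char \<one> \<psi> = \<psi>"
  unfolding conj_char_def using K_charsD(3) K.mem_carrier by (auto simp: fun_eq_iff)

lemma kernel_commutator_surj:
  assumes c: "c \<in> H" "c \<noteq> \<one>"
  shows "(\<lambda>x. (inv c \<otimes> x \<otimes> c) \<otimes> inv x) ` K = K"
proof -
  have cc: "c \<in> carrier G" using c H.mem_carrier by blast
  have conj_K: "inv c \<otimes> x \<otimes> c \<in> K" if "x \<in> K" for x
    using inv_conj_mem_kernel_iff[OF cc] that K.mem_carrier by blast
  have "inj_on (\<lambda>x. (inv c \<otimes> x \<otimes> c) \<otimes> inv x) K"
  proof (rule inj_onI)
    fix x y assume x: "x \<in> K" and y: "y \<in> K" and e: "(inv c \<otimes> x \<otimes> c) \<otimes> inv x = (inv c \<otimes> y \<otimes> c) \<otimes> inv y"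
    define u v where "u = inv c \<otimes> x \<otimes> c" "v = inv c \<otimes> y \<otimes> c"
    have uv: "u \<in> K" "v \<in> K" unfolding u_v_def using conj_K x y by auto
    have xyc: "x \<in> carrier G" "y \<in> carrier G" "u \<in> carrier G" "v \<in> carrier G"
      using x y uv K.mem_carrier by auto
    have "u = v \<otimes> inv y \<otimes> x" using e xyc unfolding u_v_def[symmetric] by (simp add: inv_solve_right')
    then have "u \<otimes> inv v = v \<otimes> (inv y \<otimes> x) \<otimes> inv v" using xyc by (simp add: m_assoc)
    also have "\<dots> = x \<otimes> inv y"
      using kernel_conj_fixed[OF uv(2) K.m_closed[OF K.m_inv_closed[OF y] x]]
        kernel_comm_mult[OF K.m_inv_closed[OF y] x] by simp
    finally have "inv c \<otimes> (x \<otimes> inv y) \<otimes> inv (inv c) = x \<otimes> inv y"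
      unfolding u_v_def using cc xyc by (simp add: inv_mult_group m_assoc mult_inv_cancel_left)
    then have "inv c = \<one> \<or> x \<otimes> inv y = \<one>"
      using fixed_point_free[of "x \<otimes> inv y" "inv c"] K.m_closed[OF x K.m_inv_closed[OF y]]
        H.m_inv_closed[OF c(1)] by blast
    then show "x = y" using c cc xyc by (auto simp: inv_solve_right')
  qed
  moreover have "(\<lambda>x. (inv c \<otimes> x \<otimes> c) \<otimes> inv x) ` K \<subseteq> K" using conj_K K.m_closed K.m_inv_closed by auto
  ultimately show ?thesis using card_subset_eq[OF finite_kernel] card_image by metis
qed

lemma conj_invariant_K_char:
  assumes \<psi>: "\<psi> \<in> K_chars" and c: "c \<in> H" "c \<noteq> \<one>"
    and inv: "\<And>x. x \<in> K \<Longrightarrow> \<psi> (inv c \<otimes> x \<otimes> c) = \<psi> x"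
  shows "\<psi> = K_principal"
proof (rule ext)
  fix z show "\<psi> z = K_principal z"
  proof (cases "z \<in> K")
    case True
    then obtain x where x: "x \<in> K" "z = (inv c \<otimes> x \<otimes> c) \<otimes> inv x"
      using kernel_commutator_surj[OF c] by blast
    have "inv c \<otimes> x \<otimes> c \<in> K"
      using inv_conj_mem_kernel_iff H.mem_carrier[OF c(1)] x(1) K.mem_carrier by blast
    then have "\<psi> z = \<psi> x * \<psi> (inv x)" using K_charsD(2)[OF \<psi>] x K.m_inv_closed inv by simp
    also have "\<dots> = 1" using K_charsD(1,2)[OF \<psi>] x(1) K.m_inv_closed K.mem_carrier by (metis r_inv)
    finally show ?thesis using True by (simp add: principal_char_def)
  qed (simp add: K_charsD(3)[OF \<psi>] principal_char_def)
qed

lemma conj_char_inj: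
  assumes \<psi>: "\<psi> \<in> K_chars" "\<psi> \<noteq> K_principal" and ab: "a \<in> H" "b \<in> H"
    and e: "conj_char a \<psi> = conj_char b \<psi>"
  shows "a = b"
proof (rule ccontr)
  assume "a \<noteq> b"
  have c: "a \<in> carrier G" "b \<in> carrier G" using ab H.mem_carrier by auto
  have "inv a \<otimes> b \<noteq> \<one>" using \<open>a \<noteq> b\<close> c by (simp add: inv_solve_left')
  moreover have "\<psi> (inv (inv a \<otimes> b) \<otimes> y \<otimes> (inv a \<otimes> b)) = \<psi> y" if y: "y \<in> K" for y
  proof -
    define x where "x = a \<otimes> y \<otimes> inv a"
    have "x \<in> K" unfolding x_def using kernel_normal y c(1) by blast
    moreover have "inv a \<otimes> x \<otimes> a = y" unfolding x_def using c y K.mem_carrier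
      by (simp add: m_assoc inv_mult_cancel_left)
    moreover have "inv b \<otimes> x \<otimes> b = inv (inv a \<otimes> b) \<otimes> y \<otimes> (inv a \<otimes> b)"
      unfolding x_def using c y K.mem_carrier by (simp add: m_assoc inv_mult_group)
    ultimately show ?thesis using fun_cong[OF e, of x] unfolding conj_char_def by simp
  qed
  ultimately have "\<psi> = K_principal"
    using conj_invariant_K_char[OF \<psi>(1)] ab H.m_closed H.m_inv_closed by blast
  with \<psi>(2) show False ..
qed

lemma conj_char_nonprincipal:
  assumes \<psi>: "\<psi> \<in> K_chars" "\<psi> \<noteq> K_principal" and a: "a \<in> H"
  shows "conj_char a \<psi> \<noteq> K_principal"
proof
  assume e: "conj_char a \<psi> = K_principal"
  have ac: "a \<in> carrier G" using a H.mem_carrier by blast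
  have "conj_char (inv a) (conj_char a \<psi>) = \<psi>"
    using conj_char_mult[OF H.m_inv_closed[OF a] a] ac conj_char_one[OF \<psi>(1)] by simp
  moreover have "conj_char (inv a) K_principal = K_principal"
    using inv_conj_mem_kernel_iff[OF inv_closed[OF ac]] K.mem_carrier
    by (auto simp: conj_char_def principal_char_def)
  ultimately show False using e \<psi>(2) by simp
qed

text \<open>Induced representations are realised on \<open>\<complex>^|H|\<close>, with the basis indexed by the
  transversal \<open>H\<close> of \<open>K\<close> through a fixed enumeration of \<open>H\<close>.\<close>

definition H_enum :: "nat \<Rightarrow> 'a" where
  "H_enum = (SOME e. bij_betw e {..<card H} H)"

lemma H_enum_bij: "bij_betw H_enum {..<card H} H"
proof -
  have "\<exists>e. bij_betw e {..<card H} H"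
    using ex_bij_betw_nat_finite[OF finite_complement] by (simp add: atLeast0LessThan)
  then show ?thesis unfolding H_enum_def by (rule someI_ex)
qed

lemma H_enum_in: "i < card H \<Longrightarrow> H_enum i \<in> H"
  using H_enum_bij bij_betwE by blast

lemma H_enum_carrier: "i < card H \<Longrightarrow> H_enum i \<in> carrier G"
  using H_enum_in H.mem_carrier by blast

lemma H_enum_inj: "i < card H \<Longrightarrow> j < card H \<Longrightarrow> H_enum i = H_enum j \<Longrightarrow> i = j"
  using H_enum_bij unfolding bij_betw_def inj_on_def by blast

lemma H_enum_surj: "a \<in> H \<Longrightarrow> \<exists>i<card H. H_enum i = a"
  using H_enum_bij unfolding bij_betw_def by force

lemma H_enum_mem_kernel_iff:
  assumes "i < card H" "j < card H"
  shows "inv (H_enum i) \<otimes> H_enum j \<in> K \<longleftrightarrow> i = j"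
proof
  assume "inv (H_enum i) \<otimes> H_enum j \<in> K"
  moreover have "inv (H_enum i) \<otimes> H_enum j \<in> H" using assms H_enum_in H.m_closed H.m_inv_closed by blast
  ultimately have "inv (H_enum i) \<otimes> H_enum j = \<one>" by (rule kernel_inter_complement)
  then show "i = j" using assms H_enum_carrier H_enum_inj by (simp add: inv_solve_left')
qed (use assms H_enum_carrier K.one_closed in simp)

lemma H_enum_transversal:
  assumes g: "g \<in> carrier G" and i: "i < card H"
  obtains l where "l < card H" "inv (H_enum i) \<otimes> g \<otimes> H_enum l \<in> K"
    "\<And>l'. l' < card H \<Longrightarrow> inv (H_enum i) \<otimes> g \<otimes> H_enum l' \<in> K \<Longrightarrow> l' = l"
proof -
  define z where "z = inv (H_enum i) \<otimes> g"
  have z: "z \<in> carrier G" unfolding z_def using g H_enum_carrier[OF i] by simp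
  obtain l where l: "l < card H" "H_enum l = inv (proj z)"
    using H_enum_surj H.m_inv_closed proj_in_complement[OF z] by blast
  have "z \<otimes> H_enum l \<in> K" using mult_inv_proj_in_kernel[OF z] l by simp
  moreover have "l' = l" if l': "l' < card H" "z \<otimes> H_enum l' \<in> K" for l'
  proof -
    have "proj z \<otimes> H_enum l' = \<one>"
      using proj_kernel[OF l'(2)] proj_mult[OF z H_enum_carrier[OF l'(1)]]
        proj_complement[OF H_enum_in[OF l'(1)]] by simp
    then have "H_enum l' = inv (proj z)"
      using proj_in_complement[OF z] H.mem_carrier H_enum_carrier[OF l'(1)] by (metis inv_equality inv_comm)
    then show ?thesis using l l' H_enum_inj by simp
  qed
  ultimately show ?thesis using l(1) that unfolding z_def by blast
qed

lemma K_char_mult_right: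
  assumes "\<psi> \<in> K_chars" "p \<in> K" "q \<in> carrier G"
  shows "\<psi> (p \<otimes> q) = \<psi> p * \<psi> q"
proof (cases "q \<in> K")
  case False
  have "p \<otimes> q \<notin> K"
  proof
    assume "p \<otimes> q \<in> K"
    then have "inv p \<otimes> (p \<otimes> q) \<in> K" using K.m_closed K.m_inv_closed assms(2) by blast
    then show False using False assms(2,3) K.mem_carrier by (simp add: inv_mult_cancel_left)
  qed
  then show ?thesis using False K_charsD(3)[OF assms(1)] by simp
qed (use K_charsD(2)[OF assms(1)] assms(2) in simp)

definition ind_rep :: "('a \<Rightarrow> complex) \<Rightarrow> 'a \<Rightarrow> complex mat" where
  "ind_rep \<psi> g = mat (card H) (card H) (\<lambda>(i, j). \<psi> (inv (H_enum i) \<otimes> g \<otimes> H_enum j))"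

definition ind_char :: "('a \<Rightarrow> complex) \<Rightarrow> 'a \<Rightarrow> complex" where
  "ind_char \<psi> g = (if g \<in> carrier G then \<Sum>a\<in>H. \<psi> (inv a \<otimes> g \<otimes> a) else 0)"

lemma ind_rep_representation:
  assumes \<psi>: "\<psi> \<in> K_chars"
  shows "representation G (card H) (ind_rep \<psi>)"
  unfolding representation_def
proof (intro conjI ballI)
  show "ind_rep \<psi> \<one> = 1\<^sub>m (card H)"
    unfolding ind_rep_def using H_enum_mem_kernel_iff K_charsD(1,3)[OF \<psi>] H_enum_carrier
    by (intro eq_matI) auto
next
  fix x y assume x: "x \<in> carrier G" and y: "y \<in> carrier G"
  show "ind_rep \<psi> (x \<otimes> y) = ind_rep \<psi> x * ind_rep \<psi> y"
  proof (rule eq_matI)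
    fix i j assume "i < dim_row (ind_rep \<psi> x * ind_rep \<psi> y)" "j < dim_col (ind_rep \<psi> x * ind_rep \<psi> y)"
    then have i: "i < card H" and j: "j < card H" unfolding ind_rep_def by auto
    obtain l where l: "l < card H" "inv (H_enum i) \<otimes> x \<otimes> H_enum l \<in> K"
      "\<And>l'. l' < card H \<Longrightarrow> inv (H_enum i) \<otimes> x \<otimes> H_enum l' \<in> K \<Longrightarrow> l' = l"
      using H_enum_transversal[OF x i] by blast
    have "(ind_rep \<psi> x * ind_rep \<psi> y) $$ (i, j) =
        (\<Sum>l'<card H. ind_rep \<psi> x $$ (i, l') * ind_rep \<psi> y $$ (l', j))"
      by (rule index_mult_mat_sum[OF _ _ i j]) (simp_all add: ind_rep_def)
    also have "\<dots> =
        (\<Sum>l'<card H. \<psi> (inv (H_enum i) \<otimes> x \<otimes> H_enum l') * \<psi> (inv (H_enum l') \<otimes> y \<otimes> H_enum j))"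
      using i j by (intro sum.cong) (simp_all add: ind_rep_def)
    also have "\<dots> = \<psi> (inv (H_enum i) \<otimes> x \<otimes> H_enum l) * \<psi> (inv (H_enum l) \<otimes> y \<otimes> H_enum j)"
    proof (rule sum_single_nonzero)
      fix l' assume "l' \<in> {..<card H}" "l' \<noteq> l"
      then have "inv (H_enum i) \<otimes> x \<otimes> H_enum l' \<notin> K" using l(3) by blast
      then show "\<psi> (inv (H_enum i) \<otimes> x \<otimes> H_enum l') * \<psi> (inv (H_enum l') \<otimes> y \<otimes> H_enum j) = 0"
        using K_charsD(3)[OF \<psi>] by simp
    qed (use l(1) in auto)
    also have "\<dots> = \<psi> (inv (H_enum i) \<otimes> (x \<otimes> y) \<otimes> H_enum j)"
      using K_char_mult_right[OF \<psi> l(2), of "inv (H_enum l) \<otimes> y \<otimes> H_enum j"]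
        x y H_enum_carrier[OF i] H_enum_carrier[OF j] H_enum_carrier[OF l(1)]
      by (simp add: m_assoc mult_inv_cancel_left)
    finally show "ind_rep \<psi> (x \<otimes> y) $$ (i, j) = (ind_rep \<psi> x * ind_rep \<psi> y) $$ (i, j)"
      unfolding ind_rep_def using i j by simp
  qed (simp_all add: ind_rep_def)
qed (simp add: ind_rep_def)

lemma character_ind_rep: "character G (ind_rep \<psi>) = ind_char \<psi>"
proof (rule ext)
  fix g
  have "(\<Sum>i<card H. \<psi> (inv (H_enum i) \<otimes> g \<otimes> H_enum i)) = (\<Sum>a\<in>H. \<psi> (inv a \<otimes> g \<otimes> a))"
    using sum.reindex_bij_betw[OF H_enum_bij, of "\<lambda>a. \<psi> (inv a \<otimes> g \<otimes> a)"] by simp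
  then show "character G (ind_rep \<psi>) g = ind_char \<psi> g"
    unfolding character_def ind_char_def mat_trace_def ind_rep_def by simp
qed

lemma ind_rep_kernel:
  assumes \<psi>: "\<psi> \<in> K_chars" and x: "x \<in> K" and ij: "i < card H" "j < card H"
  shows "ind_rep \<psi> x $$ (i, j) = (if i = j then conj_char (H_enum i) \<psi> x else 0)"
proof (cases "i = j")
  case False
  have c: "x \<in> carrier G" "H_enum i \<in> carrier G" "H_enum j \<in> carrier G"
    using x K.mem_carrier H_enum_carrier ij by auto
  have "inv (H_enum i) \<otimes> x \<otimes> H_enum j \<notin> K"
  proof
    assume a: "inv (H_enum i) \<otimes> x \<otimes> H_enum j \<in> K"
    have "inv (H_enum i) \<otimes> x \<otimes> H_enum i \<in> K" using inv_conj_mem_kernel_iff c x by blast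
    then have "inv (inv (H_enum i) \<otimes> x \<otimes> H_enum i) \<otimes> (inv (H_enum i) \<otimes> x \<otimes> H_enum j) \<in> K"
      using a K.m_closed K.m_inv_closed by blast
    then have "inv (H_enum i) \<otimes> H_enum j \<in> K"
      using c by (simp add: inv_mult_group m_assoc inv_mult_cancel_left mult_inv_cancel_left)
    then show False using H_enum_mem_kernel_iff ij False by simp
  qed
  then show ?thesis unfolding ind_rep_def using ij False K_charsD(3)[OF \<psi>] by simp
qed (use ij x in \<open>simp add: ind_rep_def conj_char_def\<close>)

text \<open>Restricted to \<open>K\<close>, the induced representation is diagonal with the pairwise distinct
  characters \<open>conj_char (H_enum i) \<psi>\<close> on the diagonal; averaging against one of them
  projects any invariant subspace onto a coordinate axis.\<close>

lemma ind_rep_invariant_unit_vec: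
  assumes \<psi>: "\<psi> \<in> K_chars" "\<psi> \<noteq> K_principal"
    and W: "invariant_subspace G (card H) (ind_rep \<psi>) W" and v: "v \<in> W" "v \<noteq> 0\<^sub>v (card H)"
  obtains i where "i < card H" "unit_vec (card H) i \<in> W"
proof -
  interpret KA: finite_comm_group "G\<lparr>carrier := K\<rparr>" by (rule finite_comm_group_kernel)
  have vc: "v \<in> carrier_vec (card H)" using v W unfolding invariant_subspace_def by auto
  have smult: "\<And>c w. w \<in> W \<Longrightarrow> c \<cdot>\<^sub>v w \<in> W"
    and act: "\<And>g w. g \<in> carrier G \<Longrightarrow> w \<in> W \<Longrightarrow> ind_rep \<psi> g *\<^sub>v w \<in> W"
    using W unfolding invariant_subspace_def by auto
  obtain i where i: "i < card H" "v $ i \<noteq> 0"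
    using v(2) vc by (metis eq_vecI carrier_vecD index_zero_vec)
  let ?\<chi> = "\<lambda>l. conj_char (H_enum l) \<psi>"
  have orth: "(\<Sum>x\<in>K. cnj (?\<chi> i x) * ?\<chi> l x) = (if l = i then of_nat (card K) else 0)"
    if l: "l < card H" for l
  proof -
    have e: "?\<chi> l = ?\<chi> i \<longleftrightarrow> l = i"
      using conj_char_inj[OF \<psi> H_enum_in[OF l] H_enum_in[OF i(1)]] H_enum_inj[OF l i(1)] by blast
    have "(\<Sum>x\<in>K. cnj (?\<chi> i x) * ?\<chi> l x) = (\<Sum>x\<in>K. ?\<chi> l x * cnj (?\<chi> i x))"
      by (simp only: mult.commute)
    also have "\<dots> = (if ?\<chi> l = ?\<chi> i then of_nat (order (G\<lparr>carrier := K\<rparr>)) else 0)"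
      using KA.lin_chars_orthogonality[OF conj_char_K_chars[OF H_enum_in[OF l] \<psi>(1)]
          conj_char_K_chars[OF H_enum_in[OF i(1)] \<psi>(1)]] by simp
    finally show ?thesis by (simp only: e order_def) simp
  qed
  define f where "f x = cnj (?\<chi> i x) \<cdot>\<^sub>v (ind_rep \<psi> x *\<^sub>v v)" for x
  have "f x \<in> W" if "x \<in> K" for x
    unfolding f_def using smult act[OF K.mem_carrier[OF that] v(1)] by blast
  then have "vec (card H) (\<lambda>l. \<Sum>x\<in>K. f x $ l) \<in> W"
    by (rule invariant_subspace_sum_closed[OF W finite_kernel])
  moreover have "vec (card H) (\<lambda>l. \<Sum>x\<in>K. f x $ l) = (of_nat (card K) * v $ i) \<cdot>\<^sub>v unit_vec (card H) i"
  proof (rule eq_vecI)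
    fix l assume "l < dim_vec ((of_nat (card K) * v $ i) \<cdot>\<^sub>v unit_vec (card H) i)"
    then have l: "l < card H" by simp
    have "f x $ l = cnj (?\<chi> i x) * ?\<chi> l x * v $ l" if x: "x \<in> K" for x
    proof -
      have "(ind_rep \<psi> x *\<^sub>v v) $ l = (\<Sum>m<card H. ind_rep \<psi> x $$ (l, m) * v $ m)"
        using l vc unfolding ind_rep_def by (simp add: scalar_prod_def atLeast0LessThan)
      also have "\<dots> = ind_rep \<psi> x $$ (l, l) * v $ l"
        by (rule sum_single_nonzero) (use ind_rep_kernel[OF \<psi>(1) x l] l in auto)
      finally show ?thesis unfolding f_def using l vc ind_rep_kernel[OF \<psi>(1) x l l]
        by (simp add: ind_rep_def mult.assoc)
    qed
    then have "(\<Sum>x\<in>K. f x $ l) = (\<Sum>x\<in>K. cnj (?\<chi> i x) * ?\<chi> l x) * v $ l"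
      by (simp add: sum_distrib_right)
    then show "vec (card H) (\<lambda>l. \<Sum>x\<in>K. f x $ l) $ l = ((of_nat (card K) * v $ i) \<cdot>\<^sub>v unit_vec (card H) i) $ l"
      using orth[OF l] l i(1) by simp
  qed simp
  ultimately have "(1 / (of_nat (card K) * v $ i)) \<cdot>\<^sub>v ((of_nat (card K) * v $ i) \<cdot>\<^sub>v unit_vec (card H) i) \<in> W"
    using smult by simp
  moreover have "card K \<noteq> 0" using card_kernel_ge_2 by simp
  ultimately have "unit_vec (card H) i \<in> W" using i(2) by (simp add: smult_smult_assoc)
  with i(1) show ?thesis by (rule that)
qed

lemma ind_rep_invariant_full:
  assumes \<psi>: "\<psi> \<in> K_chars" and W: "invariant_subspace G (card H) (ind_rep \<psi>) W"
    and i: "i < card H" "unit_vec (card H) i \<in> W"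
  shows "W = carrier_vec (card H)"
proof -
  have smult: "\<And>c w. w \<in> W \<Longrightarrow> c \<cdot>\<^sub>v w \<in> W"
    and act: "\<And>g w. g \<in> carrier G \<Longrightarrow> w \<in> W \<Longrightarrow> ind_rep \<psi> g *\<^sub>v w \<in> W"
    using W unfolding invariant_subspace_def by auto
  have unit: "unit_vec (card H) j \<in> W" if j: "j < card H" for j
  proof -
    define g where "g = H_enum j \<otimes> inv (H_enum i)"
    have g: "g \<in> carrier G" unfolding g_def using H_enum_carrier i j by simp
    have "ind_rep \<psi> g *\<^sub>v unit_vec (card H) i = unit_vec (card H) j"
    proof (rule eq_vecI)
      fix l assume "l < dim_vec (unit_vec (card H) j)"
      then have l: "l < card H" by simp
      have "(ind_rep \<psi> g *\<^sub>v unit_vec (card H) i) $ l = \<psi> (inv (H_enum l) \<otimes> H_enum j)"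
        using l i H_enum_carrier j unfolding ind_rep_def g_def by (simp add: m_assoc)
      also have "\<dots> = unit_vec (card H) j $ l"
        using H_enum_mem_kernel_iff[OF l j] K_charsD(1,3)[OF \<psi>] l j H_enum_carrier by auto
      finally show "(ind_rep \<psi> g *\<^sub>v unit_vec (card H) i) $ l = unit_vec (card H) j $ l" .
    qed (simp add: ind_rep_def)
    then show ?thesis using act[OF g i(2)] by simp
  qed
  have "w \<in> W" if w: "w \<in> carrier_vec (card H)" for w
  proof -
    have "vec (card H) (\<lambda>l. \<Sum>j\<in>{..<card H}. (w $ j \<cdot>\<^sub>v unit_vec (card H) j) $ l) \<in> W"
      by (rule invariant_subspace_sum_closed[OF W]) (use smult unit in auto)
    moreover have "vec (card H) (\<lambda>l. \<Sum>j\<in>{..<card H}. (w $ j \<cdot>\<^sub>v unit_vec (card H) j) $ l) = w"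
    proof (rule eq_vecI)
      fix l assume "l < dim_vec w"
      then have l: "l < card H" using w by simp
      have "(\<Sum>j\<in>{..<card H}. (w $ j \<cdot>\<^sub>v unit_vec (card H) j) $ l) = w $ l"
        by (rule trans[OF sum_single_nonzero[of _ l]]) (use l in auto)
      then show "vec (card H) (\<lambda>l. \<Sum>j\<in>{..<card H}. (w $ j \<cdot>\<^sub>v unit_vec (card H) j) $ l) $ l = w $ l"
        using l by simp
    qed (use w in simp)
    ultimately show ?thesis by simp
  qed
  then show ?thesis using W unfolding invariant_subspace_def by blast
qed

lemma ind_rep_irreducible:
  assumes \<psi>: "\<psi> \<in> K_chars" "\<psi> \<noteq> K_principal"
  shows "irreducible_rep G (card H) (ind_rep \<psi>)"
  unfolding irreducible_rep_def
proof (intro conjI allI impI)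
  show "representation G (card H) (ind_rep \<psi>)" by (rule ind_rep_representation[OF \<psi>(1)])
  show "0 < card H" using card_complement_ge_2 by simp
  fix W assume W: "invariant_subspace G (card H) (ind_rep \<psi>) W"
  show "W = {0\<^sub>v (card H)} \<or> W = carrier_vec (card H)"
  proof (cases "W \<subseteq> {0\<^sub>v (card H)}")
    case False
    then obtain v where "v \<in> W" "v \<noteq> 0\<^sub>v (card H)" by blast
    then obtain i where "i < card H" "unit_vec (card H) i \<in> W"
      using ind_rep_invariant_unit_vec[OF \<psi> W] by blast
    then show ?thesis using ind_rep_invariant_full[OF \<psi>(1) W] by blast
  qed (use W in \<open>auto simp: invariant_subspace_def\<close>)
qed

lemma ind_char_Irr: "\<psi> \<in> K_chars \<Longrightarrow> \<psi> \<noteq> K_principal \<Longrightarrow> ind_char \<psi> \<in> Irr G"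
  unfolding Irr_def using ind_rep_irreducible character_ind_rep
  by (intro CollectI exI[of _ "card H"] exI[of _ "ind_rep \<psi>"]) simp

abbreviation "K_chars' \<equiv> K_chars - {K_principal}"

lemma finite_H_chars: "finite H_chars"
  using finite_comm_group.finite_lin_chars[OF finite_comm_group_complement] .

lemma finite_K_chars: "finite K_chars"
  using finite_comm_group.finite_lin_chars[OF finite_comm_group_kernel] .

lemma card_H_chars: "card H_chars = card H"
  using finite_comm_group.card_lin_chars[OF finite_comm_group_complement] by (simp add: order_def)

lemma card_K_chars': "card K_chars' = card K - 1"
  using finite_comm_group.card_lin_chars[OF finite_comm_group_kernel] finite_K_chars
    finite_comm_group.principal_char_lin_chars[OF finite_comm_group_kernel]
  by (simp add: order_def card_Diff_singleton)

lemma sum_H_chars: "a \<in> H \<Longrightarrow> (\<Sum>\<mu>\<in>H_chars. \<mu> a) = (if a = \<one> then of_nat (card H) else 0)"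
  using finite_comm_group.sum_lin_chars[OF finite_comm_group_complement, of a] card_H_chars by simp

lemma sum_K_chars': "x \<in> K \<Longrightarrow> (\<Sum>\<psi>\<in>K_chars'. \<psi> x) = (if x = \<one> then of_nat (card K) else 0) - 1"
  using finite_comm_group.sum_lin_chars[OF finite_comm_group_kernel, of x]
    finite_comm_group.card_lin_chars[OF finite_comm_group_kernel]
    finite_comm_group.principal_char_lin_chars[OF finite_comm_group_kernel] finite_K_chars
  by (simp add: sum_diff1 order_def principal_char_def)

lemma ind_char_outside_kernel:
  assumes \<psi>: "\<psi> \<in> K_chars" and g: "g \<notin> K"
  shows "ind_char \<psi> g = 0"
proof (cases "g \<in> carrier G")
  case True
  have "\<psi> (inv a \<otimes> g \<otimes> a) = 0" if "a \<in> H" for a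
    using inv_conj_mem_kernel_iff[OF H.mem_carrier[OF that] True] g K_charsD(3)[OF \<psi>] by blast
  then show ?thesis unfolding ind_char_def by simp
qed (simp add: ind_char_def)

lemma ind_char_kernel: "x \<in> K \<Longrightarrow> ind_char \<psi> x = (\<Sum>a\<in>H. conj_char a \<psi> x)"
  unfolding ind_char_def conj_char_def using K.mem_carrier by simp

text \<open>Up to the multiplicity \<open>|H|\<close> of each induced character, these are the values of the regular
  character; by Schur orthogonality no other irreducible character can exist.\<close>

lemma regular_character_sum:
  assumes g: "g \<in> carrier G"
  shows "(\<Sum>\<mu>\<in>H_chars. lift_char \<mu> g) + (\<Sum>\<psi>\<in>K_chars'. ind_char \<psi> g) =
    (if g = \<one> then of_nat (card (carrier G)) else 0)"
proof (cases "g \<in> K")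
  case False
  have "(\<Sum>\<psi>\<in>K_chars'. ind_char \<psi> g) = 0" using ind_char_outside_kernel False by simp
  moreover have "proj g \<noteq> \<one>" using proj_eq_one_iff g False by simp
  ultimately show ?thesis
    using sum_H_chars[OF proj_in_complement[OF g]] False K.one_closed g by (auto simp: lift_char_def)
next
  case True
  have conj: "inv a \<otimes> g \<otimes> a \<in> K" "inv a \<otimes> g \<otimes> a = \<one> \<longleftrightarrow> g = \<one>" if "a \<in> H" for a
    using inv_conj_mem_kernel_iff[of a g] conj_eq_one_iff[of "inv a" g] that H.mem_carrier g True by auto
  have "(\<Sum>\<psi>\<in>K_chars'. ind_char \<psi> g) = (\<Sum>a\<in>H. \<Sum>\<psi>\<in>K_chars'. \<psi> (inv a \<otimes> g \<otimes> a))"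
    unfolding ind_char_def using g by (simp add: sum.swap[of _ H])
  also have "\<dots> = of_nat (card H) * ((if g = \<one> then of_nat (card K) else 0) - 1)"
    using sum_K_chars' conj by simp
  finally show ?thesis
    using lift_char_kernel True card_H_chars card_kernel_mult_card_complement[symmetric]
    by (simp add: algebra_simps)
qed

lemma Irr_eq: "Irr G = lift_char ` H_chars \<union> ind_char ` K_chars'"
proof
  show "lift_char ` H_chars \<union> ind_char ` K_chars' \<subseteq> Irr G" using lift_char_Irr ind_char_Irr by auto
next
  show "Irr G \<subseteq> lift_char ` H_chars \<union> ind_char ` K_chars'"
  proof
    fix \<chi> assume "\<chi> \<in> Irr G"
    then obtain n \<rho> where \<rho>: "irreducible_rep G n \<rho>" and \<chi>: "\<chi> = character G \<rho>" unfolding Irr_def by auto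
    define R where "R g = (\<Sum>\<mu>\<in>H_chars. lift_char \<mu> g) + (\<Sum>\<psi>\<in>K_chars'. ind_char \<psi> g)" for g
    have "(\<Sum>g\<in>carrier G. \<chi> g * R (inv g)) = (\<Sum>g\<in>carrier G. if g = \<one> then \<chi> g * of_nat (card (carrier G)) else 0)"
      unfolding R_def using regular_character_sum by (intro sum.cong) (auto simp: inv_eq_1_iff)
    also have "\<dots> = of_nat n * of_nat (card (carrier G))"
      using finite_carrier character_one[of n \<rho>] \<rho> \<chi> by (simp add: irreducible_rep_def)
    also have "\<dots> \<noteq> 0" using \<rho> finite_carrier by (auto simp: irreducible_rep_def)
    finally have nz: "(\<Sum>\<mu>\<in>H_chars. \<Sum>g\<in>carrier G. \<chi> g * lift_char \<mu> (inv g)) +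
        (\<Sum>\<psi>\<in>K_chars'. \<Sum>g\<in>carrier G. \<chi> g * ind_char \<psi> (inv g)) \<noteq> 0"
      unfolding R_def by (simp add: distrib_left sum.distrib sum_distrib_left sum.swap[of _ "carrier G"])
    have "(\<exists>\<mu>\<in>H_chars. (\<Sum>g\<in>carrier G. \<chi> g * lift_char \<mu> (inv g)) \<noteq> 0) \<or>
        (\<exists>\<psi>\<in>K_chars'. (\<Sum>g\<in>carrier G. \<chi> g * ind_char \<psi> (inv g)) \<noteq> 0)"
    proof (rule ccontr)
      assume "\<not> ?thesis"
      then have "(\<Sum>\<mu>\<in>H_chars. \<Sum>g\<in>carrier G. \<chi> g * lift_char \<mu> (inv g)) = 0"
        "(\<Sum>\<psi>\<in>K_chars'. \<Sum>g\<in>carrier G. \<chi> g * ind_char \<psi> (inv g)) = 0"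
        by (auto intro: sum.neutral)
      with nz show False by simp
    qed
    then show "\<chi> \<in> lift_char ` H_chars \<union> ind_char ` K_chars'"
    proof (elim disjE bexE)
      fix \<mu> assume "\<mu> \<in> H_chars" "(\<Sum>g\<in>carrier G. \<chi> g * lift_char \<mu> (inv g)) \<noteq> 0"
      then have "character G (lift_rep \<mu>) = \<chi>"
        using irreducible_character_eqI[OF \<rho> lift_rep_irreducible] \<chi> character_lift_rep by simp
      then show ?thesis using \<open>\<mu> \<in> H_chars\<close> character_lift_rep by auto
    next
      fix \<psi> assume "\<psi> \<in> K_chars'" "(\<Sum>g\<in>carrier G. \<chi> g * ind_char \<psi> (inv g)) \<noteq> 0"
      then have "character G (ind_rep \<psi>) = \<chi>"
        using irreducible_character_eqI[OF \<rho> ind_rep_irreducible] \<chi> character_ind_rep by simp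
      then show ?thesis using \<open>\<psi> \<in> K_chars'\<close> character_ind_rep by auto
    qed
  qed
qed

definition K_orbit :: "('a \<Rightarrow> complex) \<Rightarrow> ('a \<Rightarrow> complex) set" where
  "K_orbit \<psi> = (\<lambda>a. conj_char a \<psi>) ` H"

lemma conj_char_K_chars': "\<psi> \<in> K_chars' \<Longrightarrow> a \<in> H \<Longrightarrow> conj_char a \<psi> \<in> K_chars'"
  using conj_char_K_chars[of a \<psi>] conj_char_nonprincipal[of \<psi> a] by simp

lemma K_orbit_subset: "\<psi> \<in> K_chars' \<Longrightarrow> K_orbit \<psi> \<subseteq> K_chars'"
  unfolding K_orbit_def using conj_char_K_chars' by (auto simp del: Diff_iff)

lemma self_in_K_orbit: "\<psi> \<in> K_chars' \<Longrightarrow> \<psi> \<in> K_orbit \<psi>"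
  unfolding K_orbit_def by (rule image_eqI[of _ _ \<one>]) (use conj_char_one H.one_closed in auto)

lemma card_K_orbit: "\<psi> \<in> K_chars' \<Longrightarrow> card (K_orbit \<psi>) = card H"
  unfolding K_orbit_def using conj_char_inj by (intro card_image inj_onI) auto

lemma card_conj_char_eq:
  assumes \<psi>: "\<psi> \<in> K_chars'" "\<psi>' \<in> K_chars'" and a: "a \<in> H"
  shows "card {b \<in> H. conj_char a \<psi> = conj_char b \<psi>'} = (if \<psi>' \<in> K_orbit \<psi> then 1 else 0)"
proof (cases "\<psi>' \<in> K_orbit \<psi>")
  case True
  then obtain c where c: "c \<in> H" "\<psi>' = conj_char c \<psi>" unfolding K_orbit_def by blast
  have "{b \<in> H. conj_char a \<psi> = conj_char b \<psi>'} = {a \<otimes> inv c}"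
  proof (intro equalityI subsetI)
    fix b assume "b \<in> {b \<in> H. conj_char a \<psi> = conj_char b \<psi>'}"
    then have b: "b \<in> H" "conj_char a \<psi> = conj_char (b \<otimes> c) \<psi>" using conj_char_mult c by auto
    then have "a = b \<otimes> c" using conj_char_inj \<psi>(1) a H.m_closed c(1) by blast
    then show "b \<in> {a \<otimes> inv c}" using b(1) c(1) H.mem_carrier by (simp add: inv_solve_right)
  next
    fix b assume "b \<in> {a \<otimes> inv c}"
    then have "b = a \<otimes> inv c" by simp
    moreover have "conj_char (a \<otimes> inv c) (conj_char c \<psi>) = conj_char a \<psi>"
      using conj_char_mult[OF H.m_closed[OF a H.m_inv_closed[OF c(1)]] c(1)] a c(1) H.mem_carrier
      by (simp add: m_assoc)
    ultimately show "b \<in> {b \<in> H. conj_char a \<psi> = conj_char b \<psi>'}"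
      using a c H.m_closed H.m_inv_closed by auto
  qed
  then show ?thesis using True by simp
next
  case False
  have "{b \<in> H. conj_char a \<psi> = conj_char b \<psi>'} = {}"
  proof (rule ccontr)
    assume "{b \<in> H. conj_char a \<psi> = conj_char b \<psi>'} \<noteq> {}"
    then obtain b where b: "b \<in> H" "conj_char a \<psi> = conj_char b \<psi>'" by blast
    have "\<psi>' = conj_char (inv b) (conj_char b \<psi>')"
      using conj_char_mult[OF H.m_inv_closed[OF b(1)] b(1)] conj_char_one \<psi>(2) b(1) H.mem_carrier by simp
    also have "\<dots> = conj_char (inv b \<otimes> a) \<psi>"
      using b(2)[symmetric] conj_char_mult[OF H.m_inv_closed[OF b(1)] a] by simp
    finally show False using False H.m_closed[OF H.m_inv_closed[OF b(1)] a] unfolding K_orbit_def by blast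
  qed
  then have "card {b \<in> H. conj_char a \<psi> = conj_char b \<psi>'} = card ({} :: 'a set)" by (rule arg_cong)
  then show ?thesis using False by simp
qed

lemma kernel_inner_product_ind_char:
  assumes \<psi>: "\<psi> \<in> K_chars'" "\<psi>' \<in> K_chars'"
  shows "(\<Sum>x\<in>K. ind_char \<psi> x * cnj (ind_char \<psi>' x)) =
    (if \<psi>' \<in> K_orbit \<psi> then of_nat (card K * card H) else 0)"
proof -
  interpret KA: finite_comm_group "G\<lparr>carrier := K\<rparr>" by (rule finite_comm_group_kernel)
  have "(\<Sum>x\<in>K. ind_char \<psi> x * cnj (ind_char \<psi>' x)) =
      (\<Sum>a\<in>H. \<Sum>b\<in>H. \<Sum>x\<in>K. conj_char a \<psi> x * cnj (conj_char b \<psi>' x))"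
    using ind_char_kernel by (simp add: cnj_sum sum_product sum.swap[of _ K])
  also have "\<dots> = (\<Sum>a\<in>H. \<Sum>b\<in>H. if conj_char a \<psi> = conj_char b \<psi>' then of_nat (card K) else 0)"
    using KA.lin_chars_orthogonality conj_char_K_chars \<psi> by (intro sum.cong refl) (auto simp: order_def)
  also have "\<dots> = (\<Sum>a\<in>H. of_nat (card K) * of_nat (card {b \<in> H. conj_char a \<psi> = conj_char b \<psi>'}))"
    using finite_complement by (simp add: sum.If_cases Int_def mult.commute)
  also have "\<dots> = (\<Sum>a\<in>H. if \<psi>' \<in> K_orbit \<psi> then of_nat (card K) else 0)"
    using card_conj_char_eq[OF \<psi>] by simp
  finally show ?thesis by simp
qed

lemma ind_char_conj_char:
  assumes \<psi>: "\<psi> \<in> K_chars" and c: "c \<in> H"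
  shows "ind_char (conj_char c \<psi>) = ind_char \<psi>"
proof (rule ext)
  fix g
  have cc: "c \<in> carrier G" using c H.mem_carrier by blast
  have "(\<Sum>b\<in>H. conj_char c \<psi> (inv b \<otimes> g \<otimes> b)) = (\<Sum>b\<in>H. \<psi> (inv (b \<otimes> c) \<otimes> g \<otimes> (b \<otimes> c)))"
    if g: "g \<in> carrier G"
  proof (rule sum.cong[OF refl])
    fix b assume "b \<in> H"
    then have bc: "b \<in> carrier G" using H.mem_carrier by blast
    have e: "inv c \<otimes> (inv b \<otimes> g \<otimes> b) \<otimes> c = inv (b \<otimes> c) \<otimes> g \<otimes> (b \<otimes> c)"
      using bc cc g by (simp add: inv_mult_group m_assoc)
    moreover have "inv (b \<otimes> c) \<otimes> g \<otimes> (b \<otimes> c) \<in> K \<longleftrightarrow> inv b \<otimes> g \<otimes> b \<in> K"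
      using inv_conj_mem_kernel_iff[OF cc, of "inv b \<otimes> g \<otimes> b"] e bc g by simp
    ultimately show "conj_char c \<psi> (inv b \<otimes> g \<otimes> b) = \<psi> (inv (b \<otimes> c) \<otimes> g \<otimes> (b \<otimes> c))"
      unfolding conj_char_def using K_charsD(3)[OF \<psi>] by auto
  qed
  also have "(\<Sum>b\<in>H. \<psi> (inv (b \<otimes> c) \<otimes> g \<otimes> (b \<otimes> c))) = (\<Sum>a\<in>H. \<psi> (inv a \<otimes> g \<otimes> a))"
    by (rule sum.reindex_bij_witness[where i="\<lambda>a. a \<otimes> inv c" and j="\<lambda>b. b \<otimes> c"])
      (use c cc H.m_closed H.m_inv_closed H.mem_carrier in \<open>auto simp: m_assoc\<close>)
  finally show "ind_char (conj_char c \<psi>) g = ind_char \<psi> g" unfolding ind_char_def by simp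
qed

lemma ind_char_eq_iff:
  assumes \<psi>: "\<psi> \<in> K_chars'" "\<psi>' \<in> K_chars'"
  shows "ind_char \<psi>' = ind_char \<psi> \<longleftrightarrow> \<psi>' \<in> K_orbit \<psi>"
proof
  assume "ind_char \<psi>' = ind_char \<psi>"
  then have "(\<Sum>x\<in>K. ind_char \<psi> x * cnj (ind_char \<psi>' x)) = (\<Sum>x\<in>K. ind_char \<psi> x * cnj (ind_char \<psi> x))"
    by simp
  then show "\<psi>' \<in> K_orbit \<psi>"
    using kernel_inner_product_ind_char[OF \<psi>] kernel_inner_product_ind_char[OF \<psi>(1) \<psi>(1)]
      self_in_K_orbit[OF \<psi>(1)] card_kernel_ge_2 card_complement_ge_2 by (auto split: if_splits)
next
  assume "\<psi>' \<in> K_orbit \<psi>"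
  then show "ind_char \<psi>' = ind_char \<psi>" using ind_char_conj_char \<psi> unfolding K_orbit_def by auto
qed

lemma sum_ind_char_image:
  fixes F :: "('a \<Rightarrow> complex) \<Rightarrow> 'c::field_char_0"
  shows "(\<Sum>\<chi>\<in>ind_char ` K_chars'. F \<chi>) = (\<Sum>\<psi>\<in>K_chars'. F (ind_char \<psi>)) / of_nat (card H)"
proof -
  have "(\<Sum>\<psi>\<in>K_chars'. F (ind_char \<psi>)) = (\<Sum>\<chi>\<in>ind_char ` K_chars'. \<Sum>\<psi>\<in>{\<psi> \<in> K_chars'. ind_char \<psi> = \<chi>}. F (ind_char \<psi>))"
    using finite_K_chars by (intro sum.image_gen) simp
  also have "\<dots> = (\<Sum>\<chi>\<in>ind_char ` K_chars'. of_nat (card H) * F \<chi>)"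
  proof (rule sum.cong[OF refl])
    fix \<chi> assume "\<chi> \<in> ind_char ` K_chars'"
    then obtain \<psi> where \<psi>: "\<psi> \<in> K_chars'" "\<chi> = ind_char \<psi>" by blast
    have "{\<psi>' \<in> K_chars'. ind_char \<psi>' = \<chi>} = K_orbit \<psi>"
      using ind_char_eq_iff[OF \<psi>(1)] K_orbit_subset[OF \<psi>(1)] \<psi>(2) by blast
    moreover have "ind_char \<psi>' = \<chi>" if "\<psi>' \<in> K_orbit \<psi>" for \<psi>'
      using that ind_char_eq_iff[OF \<psi>(1)] K_orbit_subset[OF \<psi>(1)] \<psi>(2) by blast
    ultimately show "(\<Sum>\<psi>'\<in>{\<psi>' \<in> K_chars'. ind_char \<psi>' = \<chi>}. F (ind_char \<psi>')) = of_nat (card H) * F \<chi>"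
      using card_K_orbit[OF \<psi>(1)] by simp
  qed
  also have "\<dots> = of_nat (card H) * (\<Sum>\<chi>\<in>ind_char ` K_chars'. F \<chi>)" by (simp add: sum_distrib_left)
  finally show ?thesis using card_complement_ge_2 by simp
qed

lemma ind_char_one: "\<psi> \<in> K_chars \<Longrightarrow> ind_char \<psi> \<one> = of_nat (card H)"
  unfolding ind_char_def using K_charsD(1) H.mem_carrier by simp

lemma degree_lift_char: "\<mu> \<in> H_chars \<Longrightarrow> degree G (lift_char \<mu>) = 1"
  unfolding degree_def lift_char_def using proj_kernel[OF K.one_closed] H_charsD(1)[of \<mu>] by simp

lemma degree_ind_char: "\<psi> \<in> K_chars \<Longrightarrow> degree G (ind_char \<psi>) = card H"
  unfolding degree_def using ind_char_one by simp

lemma lift_char_ind_char_disjoint: "lift_char ` H_chars \<inter> ind_char ` K_chars' = {}"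
proof -
  have "lift_char \<mu> \<one> \<noteq> ind_char \<psi> \<one>" if "\<mu> \<in> H_chars" "\<psi> \<in> K_chars'" for \<mu> \<psi>
    using that ind_char_one lift_char_kernel[OF _ K.one_closed] card_complement_ge_2
    by (metis DiffD1 numeral_le_one_iff of_nat_1 of_nat_eq_iff semiring_norm(69))
  then show ?thesis by (force simp del: Diff_iff)
qed

lemma sum_Irr:
  fixes F :: "('a \<Rightarrow> complex) \<Rightarrow> 'c::field_char_0"
  shows "(\<Sum>\<chi>\<in>Irr G. F \<chi>) = (\<Sum>\<mu>\<in>H_chars. F (lift_char \<mu>)) + (\<Sum>\<psi>\<in>K_chars'. F (ind_char \<psi>)) / of_nat (card H)"
proof -
  have "(\<Sum>\<chi>\<in>Irr G. F \<chi>) = (\<Sum>\<chi>\<in>lift_char ` H_chars. F \<chi>) + (\<Sum>\<chi>\<in>ind_char ` K_chars'. F \<chi>)"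
    unfolding Irr_eq using finite_H_chars finite_K_chars lift_char_ind_char_disjoint
    by (intro sum.union_disjoint) auto
  also have "(\<Sum>\<chi>\<in>lift_char ` H_chars. F \<chi>) = (\<Sum>\<mu>\<in>H_chars. F (lift_char \<mu>))"
    by (rule sum.reindex[OF lift_char_inj, unfolded comp_def])
  finally show ?thesis using sum_ind_char_image by simp
qed

lemma sum_ind_char_kernel: "\<psi> \<in> K_chars' \<Longrightarrow> (\<Sum>x\<in>K. ind_char \<psi> x) = 0"
  using ind_char_kernel finite_comm_group.sum_lin_char_nonprincipal[OF finite_comm_group_kernel]
    conj_char_K_chars' by (simp add: sum.swap[of _ H])

end

section \<open>The amenability constant of \<open>ZL\<^sup>1(G)\<close>\<close>

lemma sum_if_count:
  assumes "finite S"
  shows "(\<Sum>x\<in>S. if Q x then (a::real) else b) = real (card {x \<in> S. Q x}) * a + real (card {x \<in> S. \<not> Q x}) * b"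
  using assms by (simp add: sum.If_cases Int_def)

context abelian_frobenius begin

definition conj_count :: "'a \<Rightarrow> 'a \<Rightarrow> nat" where
  "conj_count g g' = card {c \<in> H. c \<otimes> g \<otimes> inv c = g'}"

lemma card_conj_pairs:
  assumes g: "g \<in> carrier G" and g': "g' \<in> carrier G"
  shows "card {p \<in> H \<times> H. inv (fst p) \<otimes> g \<otimes> fst p = inv (snd p) \<otimes> g' \<otimes> snd p} = card H * conj_count g g'"
proof -
  have fibre: "{b \<in> H. inv a \<otimes> g \<otimes> a = inv b \<otimes> g' \<otimes> b} = (\<lambda>c. c \<otimes> a) ` {c \<in> H. c \<otimes> g \<otimes> inv c = g'}"
    if a: "a \<in> H" for a
  proof (intro equalityI subsetI)
    fix b assume "b \<in> {b \<in> H. inv a \<otimes> g \<otimes> a = inv b \<otimes> g' \<otimes> b}"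
    then have b: "b \<in> H" and e: "inv a \<otimes> g \<otimes> a = inv b \<otimes> g' \<otimes> b" by auto
    have c: "a \<in> carrier G" "b \<in> carrier G" using a b H.mem_carrier by auto
    have "(b \<otimes> inv a) \<otimes> g \<otimes> inv (b \<otimes> inv a) = b \<otimes> (inv a \<otimes> g \<otimes> a) \<otimes> inv b"
      using c g by (simp add: inv_mult_group m_assoc)
    also have "\<dots> = g'" using c g' by (simp add: e m_assoc mult_inv_cancel_left)
    finally have "b \<otimes> inv a \<in> {c \<in> H. c \<otimes> g \<otimes> inv c = g'}" using a b H.m_closed H.m_inv_closed by blast
    moreover have "b = (b \<otimes> inv a) \<otimes> a" using c by (simp add: m_assoc)
    ultimately show "b \<in> (\<lambda>c. c \<otimes> a) ` {c \<in> H. c \<otimes> g \<otimes> inv c = g'}" by blast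
  next
    fix b assume "b \<in> (\<lambda>c. c \<otimes> a) ` {c \<in> H. c \<otimes> g \<otimes> inv c = g'}"
    then obtain c where c: "c \<in> H" "c \<otimes> g \<otimes> inv c = g'" "b = c \<otimes> a" by blast
    have cc: "a \<in> carrier G" "c \<in> carrier G" using a c H.mem_carrier by auto
    have "inv b \<otimes> g' \<otimes> b = inv a \<otimes> (inv c \<otimes> (c \<otimes> g \<otimes> inv c) \<otimes> c) \<otimes> a"
      using cc g' c(2,3) by (simp add: inv_mult_group m_assoc)
    also have "\<dots> = inv a \<otimes> g \<otimes> a" using cc g by (simp add: m_assoc inv_mult_cancel_left)
    finally show "b \<in> {b \<in> H. inv a \<otimes> g \<otimes> a = inv b \<otimes> g' \<otimes> b}"
      using c a H.m_closed by auto
  qed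
  have "inj_on (\<lambda>c. c \<otimes> a) {c \<in> H. c \<otimes> g \<otimes> inv c = g'}" if "a \<in> H" for a
    using that H.mem_carrier by (intro inj_onI) auto
  then have card_fibre: "card {b \<in> H. inv a \<otimes> g \<otimes> a = inv b \<otimes> g' \<otimes> b} = conj_count g g'" if "a \<in> H" for a
    using fibre[OF that] that unfolding conj_count_def by (simp add: card_image)
  have "{p \<in> H \<times> H. inv (fst p) \<otimes> g \<otimes> fst p = inv (snd p) \<otimes> g' \<otimes> snd p} =
      Sigma H (\<lambda>a. {b \<in> H. inv a \<otimes> g \<otimes> a = inv b \<otimes> g' \<otimes> b})" by auto
  then show ?thesis
    using card_fibre finite_complement by (simp add: card_SigmaI)
qed

lemma K_chars'_column_orthogonality:
  assumes x: "x \<in> K" and y: "y \<in> K"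
  shows "(\<Sum>\<psi>\<in>K_chars'. \<psi> x * cnj (\<psi> y)) = (if x = y then of_nat (card K) else 0) - 1"
proof -
  have "K_principal \<in> K_chars"
    using finite_comm_group.principal_char_lin_chars[OF finite_comm_group_kernel] .
  then have "(\<Sum>\<psi>\<in>K_chars. \<psi> x * cnj (\<psi> y)) = 1 + (\<Sum>\<psi>\<in>K_chars'. \<psi> x * cnj (\<psi> y))"
    using finite_K_chars x y by (simp add: sum.remove principal_char_def)
  moreover have "(\<Sum>\<psi>\<in>K_chars. \<psi> x * cnj (\<psi> y)) = (if x = y then of_nat (card K) else 0)"
    using finite_comm_group.lin_chars_column_orthogonality[OF finite_comm_group_kernel, of x y] x y
    by (simp add: order_def)
  ultimately show ?thesis by (simp add: algebra_simps)
qed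

lemma sum_ind_char_mult_cnj:
  assumes g: "g \<in> carrier G" and g': "g' \<in> carrier G"
  shows "(\<Sum>\<psi>\<in>K_chars'. ind_char \<psi> g * cnj (ind_char \<psi> g')) =
    (if g \<in> K \<and> g' \<in> K then of_nat (card K * card H * conj_count g g') - of_nat (card H * card H) else 0)"
proof (cases "g \<in> K \<and> g' \<in> K")
  case False
  then have "ind_char \<psi> g * cnj (ind_char \<psi> g') = 0" if "\<psi> \<in> K_chars'" for \<psi>
    using ind_char_outside_kernel that by auto
  then have "(\<Sum>\<psi>\<in>K_chars'. ind_char \<psi> g * cnj (ind_char \<psi> g')) = 0" by (intro sum.neutral) blast
  then show ?thesis using False by (simp only: if_False)
next
  case True
  have conj: "inv a \<otimes> x \<otimes> a \<in> K" if "a \<in> H" "x \<in> K" for a x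
    using inv_conj_mem_kernel_iff[OF H.mem_carrier K.mem_carrier] that by blast
  have "(\<Sum>\<psi>\<in>K_chars'. ind_char \<psi> g * cnj (ind_char \<psi> g')) =
      (\<Sum>a\<in>H. \<Sum>b\<in>H. \<Sum>\<psi>\<in>K_chars'. \<psi> (inv a \<otimes> g \<otimes> a) * cnj (\<psi> (inv b \<otimes> g' \<otimes> b)))"
    unfolding ind_char_def using g g' by (simp add: cnj_sum sum_product sum.swap[of _ "K_chars'"])
  also have "\<dots> = (\<Sum>p\<in>H \<times> H. (if inv (fst p) \<otimes> g \<otimes> fst p = inv (snd p) \<otimes> g' \<otimes> snd p
      then of_nat (card K) else 0) - 1)"
    using K_chars'_column_orthogonality conj True by (simp add: sum.cartesian_product case_prod_unfold)
  also have "\<dots> = of_nat (card K) * of_nat (card {p \<in> H \<times> H. inv (fst p) \<otimes> g \<otimes> fst p = inv (snd p) \<otimes> g' \<otimes> snd p})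
      - of_nat (card H * card H)"
    using finite_complement by (simp add: sum_subtractf sum.If_cases Int_def card_cartesian_product)
  finally show ?thesis using True card_conj_pairs[OF g g'] by (simp add: mult.assoc)
qed

text \<open>The coefficient \<open>\<Sum>\<^sub>\<chi> d\<^sub>\<chi>\<^sup>2 \<chi>(g) \<chi>(g')\<^sup>*\<close> of the formula for \<open>AMZL\<close>.\<close>

definition zl_coeff :: "'a \<Rightarrow> 'a \<Rightarrow> real" where
  "zl_coeff g g' = real (card H) * (if proj g = proj g' then 1 else 0) +
     (if g \<in> K \<and> g' \<in> K then real (card H) * (real (card K * card H * conj_count g g') - real (card H * card H)) else 0)"

lemma sum_Irr_eq_zl_coeff:
  assumes g: "g \<in> carrier G" and g': "g' \<in> carrier G"
  shows "(\<Sum>\<chi>\<in>Irr G. complex_of_real ((degree G \<chi>)\<^sup>2) * \<chi> g * cnj (\<chi> g')) = complex_of_real (zl_coeff g g')"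
proof -
  have "(\<Sum>\<mu>\<in>H_chars. complex_of_real ((degree G (lift_char \<mu>))\<^sup>2) * lift_char \<mu> g * cnj (lift_char \<mu> g')) =
      (\<Sum>\<mu>\<in>H_chars. \<mu> (proj g) * cnj (\<mu> (proj g')))"
    using degree_lift_char g g' unfolding lift_char_def by (intro sum.cong) auto
  also have "\<dots> = (if proj g = proj g' then of_nat (card H) else 0)"
    using finite_comm_group.lin_chars_column_orthogonality[OF finite_comm_group_complement]
      proj_in_complement g g' by (simp add: order_def)
  finally have lift: "(\<Sum>\<mu>\<in>H_chars. complex_of_real ((degree G (lift_char \<mu>))\<^sup>2) * lift_char \<mu> g * cnj (lift_char \<mu> g')) =
      (if proj g = proj g' then of_nat (card H) else 0)" .
  have "(\<Sum>\<psi>\<in>K_chars'. complex_of_real ((degree G (ind_char \<psi>))\<^sup>2) * ind_char \<psi> g * cnj (ind_char \<psi> g')) =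
      of_nat (card H) * of_nat (card H) * (\<Sum>\<psi>\<in>K_chars'. ind_char \<psi> g * cnj (ind_char \<psi> g'))"
    using degree_ind_char by (simp add: sum_distrib_left power2_eq_square mult.assoc)
  then have ind: "(\<Sum>\<psi>\<in>K_chars'. complex_of_real ((degree G (ind_char \<psi>))\<^sup>2) * ind_char \<psi> g * cnj (ind_char \<psi> g')) / of_nat (card H) =
      of_nat (card H) * (\<Sum>\<psi>\<in>K_chars'. ind_char \<psi> g * cnj (ind_char \<psi> g'))"
    using card_complement_ge_2 by simp
  show ?thesis
    using sum_Irr[of "\<lambda>\<chi>. complex_of_real ((degree G \<chi>)\<^sup>2) * \<chi> g * cnj (\<chi> g')"] lift ind
      sum_ind_char_mult_cnj[OF g g'] unfolding zl_coeff_def by (simp add: algebra_simps)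
qed

lemma AMZL_eq_sum_zl_coeff:
  "AMZL G = (1 / real (card (carrier G)) ^ 2) * (\<Sum>g\<in>carrier G. \<Sum>g'\<in>carrier G. \<bar>zl_coeff g g'\<bar>)"
proof -
  define X where "X C C' = cmod (\<Sum>\<chi>\<in>Irr G. complex_of_real ((degree G \<chi>)\<^sup>2) * class_val \<chi> C * cnj (class_val \<chi> C'))" for C C'
  have "(\<Sum>C\<in>conj_classes G. \<Sum>C'\<in>conj_classes G. real (card C) * real (card C') * X C C') =
      (\<Sum>C\<in>conj_classes G. real (card C) * (\<Sum>C'\<in>conj_classes G. real (card C') * X C C'))"
    by (simp add: sum_distrib_left mult.assoc)
  also have "\<dots> = (\<Sum>C\<in>conj_classes G. real (card C) * (\<Sum>g'\<in>carrier G. X C (conj_class G g')))"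
    by (intro sum.cong refl arg_cong[where f="\<lambda>x. _ * x"] sum_conj_classes[OF finite_carrier])
  also have "\<dots> = (\<Sum>g\<in>carrier G. \<Sum>g'\<in>carrier G. X (conj_class G g) (conj_class G g'))"
    by (rule sum_conj_classes[OF finite_carrier])
  also have "\<dots> = (\<Sum>g\<in>carrier G. \<Sum>g'\<in>carrier G. \<bar>zl_coeff g g'\<bar>)"
    unfolding X_def using class_val_Irr sum_Irr_eq_zl_coeff by (intro sum.cong refl) (simp cong: sum.cong)
  finally show ?thesis unfolding AMZL_def X_def by simp
qed

lemma conj_count_one: "conj_count \<one> g' = (if g' = \<one> then card H else 0)"
proof -
  have "c \<otimes> \<one> \<otimes> inv c = \<one>" if "c \<in> H" for c using that H.mem_carrier by simp
  then have "{c \<in> H. c \<otimes> \<one> \<otimes> inv c = g'} = (if g' = \<one> then H else {})" by auto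
  then show ?thesis unfolding conj_count_def by simp
qed

lemma conj_count_kernel:
  assumes g: "g \<in> K" "g \<noteq> \<one>"
  shows "conj_count g g' = (if g' \<in> conj_class G g then 1 else 0)"
proof (cases "g' \<in> conj_class G g")
  case True
  then obtain a where a: "a \<in> H" "g' = a \<otimes> g \<otimes> inv a" using conj_class_kernel[OF g(1)] by auto
  have "{c \<in> H. c \<otimes> g \<otimes> inv c = g'} = {a}" using a complement_conj_inj[OF g] by auto
  then show ?thesis unfolding conj_count_def using True by simp
next
  case False
  then have "{c \<in> H. c \<otimes> g \<otimes> inv c = g'} = {}" using conj_class_kernel[OF g(1)] by auto
  then have "card {c \<in> H. c \<otimes> g \<otimes> inv c = g'} = 0" by (simp only: card.empty)
  then show ?thesis unfolding conj_count_def using False by simp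
qed

lemma card_proj_fibre: "a \<in> H \<Longrightarrow> card {g \<in> carrier G. proj g = a} = card K"
proof -
  assume a: "a \<in> H"
  have "{g \<in> carrier G. proj g = a} = (\<lambda>x. x \<otimes> a) ` K"
  proof (intro equalityI subsetI)
    fix g assume "g \<in> {g \<in> carrier G. proj g = a}"
    then show "g \<in> (\<lambda>x. x \<otimes> a) ` K" using proj_decomp mult_inv_proj_in_kernel by force
  qed (use proj_eq a K.mem_carrier H.mem_carrier in auto)
  moreover have "inj_on (\<lambda>x. x \<otimes> a) K" using a H.mem_carrier K.mem_carrier by (intro inj_onI) auto
  ultimately show ?thesis by (simp add: card_image)
qed

lemma row_sum_zl_coeff_outside_kernel:
  assumes g: "g \<in> carrier G" "g \<notin> K"
  shows "(\<Sum>g'\<in>carrier G. \<bar>zl_coeff g g'\<bar>) = real (card H) * real (card K)"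
proof -
  have "(\<Sum>g'\<in>carrier G. \<bar>zl_coeff g g'\<bar>) = (\<Sum>g'\<in>carrier G. if proj g' = proj g then real (card H) else 0)"
    unfolding zl_coeff_def using g by (intro sum.cong) auto
  also have "\<dots> = real (card {g' \<in> carrier G. proj g' = proj g}) * real (card H)"
    using sum_if_count[OF finite_carrier] by simp
  finally show ?thesis using card_proj_fibre[OF proj_in_complement[OF g(1)]] by simp
qed

lemma row_sum_zl_coeff_restrict_kernel:
  assumes g: "g \<in> K"
  shows "(\<Sum>g'\<in>carrier G. \<bar>zl_coeff g g'\<bar>) = (\<Sum>g'\<in>K. \<bar>zl_coeff g g'\<bar>)"
proof -
  have "zl_coeff g g' = 0" if "g' \<in> carrier G - K" for g'
  proof -
    have "proj g' \<noteq> proj g" using proj_eq_one_iff[of g'] that proj_kernel[OF g] by simp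
    then show ?thesis unfolding zl_coeff_def using that by simp
  qed
  then have "(\<Sum>g'\<in>carrier G - K. \<bar>zl_coeff g g'\<bar>) = 0" by simp
  then show ?thesis using sum.subset_diff[OF K.subset finite_carrier, of "\<lambda>g'. \<bar>zl_coeff g g'\<bar>"] by simp
qed

lemma zl_coeff_kernel:
  "g \<in> K \<Longrightarrow> g' \<in> K \<Longrightarrow>
   zl_coeff g g' = real (card H) + real (card H) * (real (card K) * real (card H) * real (conj_count g g') - real (card H) ^ 2)"
  unfolding zl_coeff_def using proj_kernel by (simp add: power2_eq_square)

lemma row_sum_zl_coeff_one:
  "(\<Sum>g'\<in>carrier G. \<bar>zl_coeff \<one> g'\<bar>) =
     real (card H) + real (card H) ^ 3 * real (card K) - real (card H) ^ 3 +
     (real (card K) - 1) * (real (card H) ^ 3 - real (card H))"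
proof -
  define h k where "h = real (card H)" "k = real (card K)"
  have h2: "2 \<le> h" and k2: "2 \<le> k" unfolding h_k_def using card_complement_ge_2 card_kernel_ge_2 by simp_all
  have "1 \<le> h * h" using mult_mono[of 1 h 1 h] h2 by simp
  then have "h * 1 \<le> h * (h * h)" using h2 by (intro mult_left_mono) auto
  moreover have "h ^ 3 * 1 \<le> h ^ 3 * k" using h2 k2 by (intro mult_left_mono) auto
  ultimately have "h \<le> h ^ 3" "h ^ 3 \<le> h ^ 3 * k" by (simp_all add: power3_eq_cube)
  then have nonneg: "0 \<le> h + h ^ 3 * k - h ^ 3" "0 \<le> h ^ 3 - h" using h2 by linarith+
  have "(\<Sum>g'\<in>K. \<bar>zl_coeff \<one> g'\<bar>) = (\<Sum>g'\<in>K. if g' = \<one> then h + h ^ 3 * k - h ^ 3 else h ^ 3 - h)"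
  proof (rule sum.cong[OF refl])
    fix g' assume g': "g' \<in> K"
    have z: "zl_coeff \<one> g' = h + h * (k * h * real (conj_count \<one> g') - h ^ 2)"
      using zl_coeff_kernel[OF K.one_closed g'] unfolding h_k_def by simp
    show "\<bar>zl_coeff \<one> g'\<bar> = (if g' = \<one> then h + h ^ 3 * k - h ^ 3 else h ^ 3 - h)"
    proof (cases "g' = \<one>")
      case True
      then have "zl_coeff \<one> g' = h + h ^ 3 * k - h ^ 3"
        using z conj_count_one unfolding h_k_def by (simp add: power2_eq_square power3_eq_cube algebra_simps)
      then show ?thesis using True nonneg by simp
    next
      case False
      then have "zl_coeff \<one> g' = h - h ^ 3"
        using z conj_count_one by (simp add: power2_eq_square power3_eq_cube algebra_simps)
      then show ?thesis using False nonneg by simp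
    qed
  qed
  also have "\<dots> = real (card {g' \<in> K. g' = \<one>}) * (h + h ^ 3 * k - h ^ 3) + real (card {g' \<in> K. g' \<noteq> \<one>}) * (h ^ 3 - h)"
    by (rule sum_if_count[OF finite_kernel])
  also have "{g' \<in> K. g' = \<one>} = {\<one>}" using K.one_closed by auto
  also have "{g' \<in> K. g' \<noteq> \<one>} = K - {\<one>}" by auto
  also have "real (card (K - {\<one>})) = k - 1"
    unfolding h_k_def using K.one_closed finite_kernel card_kernel_ge_2 by (simp add: card_Diff_singleton of_nat_diff)
  finally show ?thesis using row_sum_zl_coeff_restrict_kernel[OF K.one_closed] unfolding h_k_def by simp
qed

lemma row_sum_zl_coeff_kernel:
  assumes g: "g \<in> K" "g \<noteq> \<one>"
  shows "(\<Sum>g'\<in>carrier G. \<bar>zl_coeff g g'\<bar>) =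
     real (card H) * (real (card H) + real (card H) ^ 2 * real (card K) - real (card H) ^ 3) +
     (real (card K) - real (card H)) * (real (card H) ^ 3 - real (card H))"
proof -
  define h k where "h = real (card H)" "k = real (card K)"
  have h2: "2 \<le> h" and hk: "h + 1 \<le> k"
    unfolding h_k_def using card_complement_ge_2 card_complement_less_card_kernel by simp_all
  have "1 \<le> h * h" using mult_mono[of 1 h 1 h] h2 by simp
  then have "h * 1 \<le> h * (h * h)" using h2 by (intro mult_left_mono) auto
  moreover have "(h * h) * h \<le> (h * h) * k" using h2 hk by (intro mult_left_mono) auto
  ultimately have "h \<le> h ^ 3" "h ^ 3 \<le> h ^ 2 * k" by (simp_all add: power3_eq_cube power2_eq_square)
  then have nonneg: "0 \<le> h + h ^ 2 * k - h ^ 3" "0 \<le> h ^ 3 - h" using h2 by linarith+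
  have "(\<Sum>g'\<in>K. \<bar>zl_coeff g g'\<bar>) =
      (\<Sum>g'\<in>K. if g' \<in> conj_class G g then h + h ^ 2 * k - h ^ 3 else h ^ 3 - h)"
  proof (rule sum.cong[OF refl])
    fix g' assume g': "g' \<in> K"
    have z: "zl_coeff g g' = h + h * (k * h * real (conj_count g g') - h ^ 2)"
      using zl_coeff_kernel[OF g(1) g'] unfolding h_k_def by simp
    show "\<bar>zl_coeff g g'\<bar> = (if g' \<in> conj_class G g then h + h ^ 2 * k - h ^ 3 else h ^ 3 - h)"
    proof (cases "g' \<in> conj_class G g")
      case True
      then have "zl_coeff g g' = h + h ^ 2 * k - h ^ 3"
        using z conj_count_kernel[OF g] by (simp add: power2_eq_square power3_eq_cube algebra_simps)
      then show ?thesis using True nonneg by simp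
    next
      case False
      then have "zl_coeff g g' = h - h ^ 3"
        using z conj_count_kernel[OF g] by (simp add: power2_eq_square power3_eq_cube algebra_simps)
      then show ?thesis using False nonneg by simp
    qed
  qed
  also have "\<dots> = real (card {g' \<in> K. g' \<in> conj_class G g}) * (h + h ^ 2 * k - h ^ 3) +
      real (card {g' \<in> K. g' \<notin> conj_class G g}) * (h ^ 3 - h)"
    by (rule sum_if_count[OF finite_kernel])
  also have "{g' \<in> K. g' \<in> conj_class G g} = conj_class G g" using conj_class_kernel_subset[OF g(1)] by auto
  also have "{g' \<in> K. g' \<notin> conj_class G g} = K - conj_class G g" by auto
  also have "real (card (K - conj_class G g)) = k - h"
    unfolding h_k_def using card_Diff_subset[OF _ conj_class_kernel_subset[OF g(1)]] card_conj_class_kernel[OF g]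
      finite_kernel conj_class_kernel_subset[OF g(1)] card_complement_less_card_kernel
    by (simp add: finite_subset of_nat_diff)
  finally show ?thesis
    using row_sum_zl_coeff_restrict_kernel[OF g(1)] card_conj_class_kernel[OF g] unfolding h_k_def by simp
qed

lemma AMZL_value:
  "AMZL G = 1 + (2 * ((real (card H))\<^sup>2 - 1) / real (card H)) *
     (1 - (real (card H) - 1) / real (card K)) * (1 - 1 / real (card K))"
proof -
  define h k where "h = real (card H)" "k = real (card K)"
  have N: "real (card (carrier G)) = k * h"
    unfolding h_k_def using card_kernel_mult_card_complement by (metis of_nat_mult)
  have h0: "h \<noteq> 0" and k0: "k \<noteq> 0"
    unfolding h_k_def using card_complement_ge_2 card_kernel_ge_2 by auto
  define R where "R g = (\<Sum>g'\<in>carrier G. \<bar>zl_coeff g g'\<bar>)" for g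
  have "(\<Sum>g\<in>carrier G - K. R g) = (k * h - k) * (h * k)"
    unfolding R_def using row_sum_zl_coeff_outside_kernel K.subset finite_kernel finite_carrier N
    by (simp add: h_k_def card_Diff_subset of_nat_diff card_mono)
  moreover have "(\<Sum>g\<in>K - {\<one>}. R g) = (k - 1) * (h * (h + h\<^sup>2 * k - h ^ 3) + (k - h) * (h ^ 3 - h))"
    unfolding R_def using row_sum_zl_coeff_kernel finite_kernel K.one_closed card_kernel_ge_2
    by (simp add: h_k_def card_Diff_singleton of_nat_diff)
  moreover have "(\<Sum>g\<in>carrier G. R g) = (\<Sum>g\<in>carrier G - K. R g) + R \<one> + (\<Sum>g\<in>K - {\<one>}. R g)"
    using sum.subset_diff[OF K.subset finite_carrier, of R] sum.remove[OF finite_kernel K.one_closed, of R]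
    by (simp add: add.assoc)
  ultimately have "(\<Sum>g\<in>carrier G. R g) = (k * h - k) * (h * k) + (h + h ^ 3 * k - h ^ 3 + (k - 1) * (h ^ 3 - h)) +
      (k - 1) * (h * (h + h\<^sup>2 * k - h ^ 3) + (k - h) * (h ^ 3 - h))"
    using row_sum_zl_coeff_one unfolding R_def h_k_def by simp
  then have "AMZL G = (1 / (k * h)\<^sup>2) * ((k * h - k) * (h * k) + (h + h ^ 3 * k - h ^ 3 + (k - 1) * (h ^ 3 - h)) +
      (k - 1) * (h * (h + h\<^sup>2 * k - h ^ 3) + (k - h) * (h ^ 3 - h)))"
    using AMZL_eq_sum_zl_coeff N unfolding R_def by simp
  also have "\<dots> = 1 + (2 * (h\<^sup>2 - 1) / h) * (1 - (h - 1) / k) * (1 - 1 / k)"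
    using h0 k0 by (simp add: divide_simps) (simp add: algebra_simps power2_eq_square power3_eq_cube)
  finally show ?thesis unfolding h_k_def .
qed

end

section \<open>The amenability constant of \<open>ZA(G)\<close>\<close>

context abelian_frobenius begin

definition class_size :: "'a \<Rightarrow> nat" where
  "class_size g = (if g = \<one> then 1 else if g \<in> K then card H else card K)"

lemma card_conj_class: "g \<in> carrier G \<Longrightarrow> card (conj_class G g) = class_size g"
  unfolding class_size_def using conj_class_one card_conj_class_kernel card_conj_class_outside_kernel by auto

lemma sum_class_size_kernel:
  fixes f :: "'a \<Rightarrow> complex"
  assumes f: "\<And>g. g \<in> carrier G \<Longrightarrow> g \<notin> K \<Longrightarrow> f g = 0"
  shows "(\<Sum>g\<in>carrier G. of_nat (class_size g) * f g) = f \<one> + of_nat (card H) * ((\<Sum>g\<in>K. f g) - f \<one>)"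
proof -
  have "(\<Sum>g\<in>carrier G - K. of_nat (class_size g) * f g) = 0" using f by simp
  then have "(\<Sum>g\<in>carrier G. of_nat (class_size g) * f g) = (\<Sum>g\<in>K. of_nat (class_size g) * f g)"
    using sum.subset_diff[OF K.subset finite_carrier, of "\<lambda>g. of_nat (class_size g) * f g"] by simp
  also have "\<dots> = f \<one> + (\<Sum>g\<in>K - {\<one>}. of_nat (card H) * f g)"
    using sum.remove[OF finite_kernel K.one_closed, of "\<lambda>g. of_nat (class_size g) * f g"]
    by (simp add: class_size_def)
  also have "(\<Sum>g\<in>K - {\<one>}. of_nat (card H) * f g) = of_nat (card H) * ((\<Sum>g\<in>K. f g) - f \<one>)"
    using finite_kernel K.one_closed by (simp add: sum_distrib_left[symmetric] sum_diff1)
  finally show ?thesis .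
qed

lemma sum_proj: "(\<Sum>g\<in>carrier G. F (proj g)) = of_nat (card K) * (\<Sum>a\<in>H. (F a :: complex))"
proof -
  have "(\<Sum>g\<in>carrier G. F (proj g)) = (\<Sum>a\<in>H. \<Sum>g\<in>{g \<in> carrier G. proj g = a}. F (proj g))"
    by (rule sum.group[symmetric]) (use finite_carrier finite_complement proj_in_complement in auto)
  also have "\<dots> = (\<Sum>a\<in>H. of_nat (card K) * F a)"
    using card_proj_fibre by (intro sum.cong refl) simp
  finally show ?thesis by (simp add: sum_distrib_left)
qed

text \<open>The coefficient \<open>\<Sum>\<^sub>C |C|\<^sup>2 \<chi>(C) \<chi>'(C)\<^sup>*\<close> of the formula for \<open>AMZA\<close>, as a sum over
  elements.\<close>

definition za_coeff :: "('a \<Rightarrow> complex) \<Rightarrow> ('a \<Rightarrow> complex) \<Rightarrow> complex" where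
  "za_coeff \<chi> \<chi>' = (\<Sum>g\<in>carrier G. of_nat (class_size g) * \<chi> g * cnj (\<chi>' g))"

lemma AMZA_eq_sum_za_coeff:
  "AMZA G = (1 / real (card (carrier G)) ^ 2) *
    (\<Sum>\<chi>\<in>Irr G. \<Sum>\<chi>'\<in>Irr G. degree G \<chi> * degree G \<chi>' * cmod (za_coeff \<chi> \<chi>'))"
proof -
  have "(\<Sum>C\<in>conj_classes G. complex_of_real ((real (card C))\<^sup>2) * class_val \<chi> C * cnj (class_val \<chi>' C)) =
      za_coeff \<chi> \<chi>'" if \<chi>: "\<chi> \<in> Irr G" "\<chi>' \<in> Irr G" for \<chi> \<chi>'
  proof -
    have "(\<Sum>C\<in>conj_classes G. complex_of_real ((real (card C))\<^sup>2) * class_val \<chi> C * cnj (class_val \<chi>' C)) =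
        (\<Sum>C\<in>conj_classes G. of_nat (card C) * (of_nat (card C) * class_val \<chi> C * cnj (class_val \<chi>' C)))"
      by (simp add: power2_eq_square mult.assoc)
    also have "\<dots> = (\<Sum>g\<in>carrier G. of_nat (card (conj_class G g)) *
        class_val \<chi> (conj_class G g) * cnj (class_val \<chi>' (conj_class G g)))"
      by (rule sum_conj_classes[OF finite_carrier])
    also have "\<dots> = za_coeff \<chi> \<chi>'"
      unfolding za_coeff_def using card_conj_class class_val_Irr \<chi> by (intro sum.cong) auto
    finally show ?thesis .
  qed
  then show ?thesis unfolding AMZA_def by (intro arg_cong[where f="\<lambda>x. _ * x"] sum.cong refl) auto
qed

lemma za_coeff_lift_lift:
  assumes \<mu>: "\<mu> \<in> H_chars" "\<mu>' \<in> H_chars"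
  shows "za_coeff (lift_char \<mu>) (lift_char \<mu>') = of_real (1 + real (card H) * (real (card K) - 1) +
     real (card K) ^ 2 * ((if \<mu> = \<mu>' then real (card H) else 0) - 1))"
proof -
  define f where "f g = \<mu> (proj g) * cnj (\<mu>' (proj g))" for g
  have f_kernel: "f g = 1" if "g \<in> K" for g
    unfolding f_def using proj_kernel[OF that] H_charsD(1)[OF \<mu>(1)] H_charsD(1)[OF \<mu>(2)] by simp
  have "za_coeff (lift_char \<mu>) (lift_char \<mu>') = (\<Sum>g\<in>carrier G. of_nat (class_size g) * f g)"
    unfolding za_coeff_def lift_char_def f_def by (intro sum.cong) (auto simp: mult.assoc)
  also have "\<dots> = (\<Sum>g\<in>K. of_nat (class_size g) * f g) + (\<Sum>g\<in>carrier G - K. of_nat (class_size g) * f g)"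
    using sum.subset_diff[OF K.subset finite_carrier] by (simp add: add.commute)
  also have "(\<Sum>g\<in>K. of_nat (class_size g) * f g) = 1 + of_nat (card H) * (of_nat (card K) - 1)"
  proof -
    have "(\<Sum>g\<in>K. of_nat (class_size g) * f g) = 1 + (\<Sum>g\<in>K - {\<one>}. of_nat (card H))"
      using sum.remove[OF finite_kernel K.one_closed, of "\<lambda>g. of_nat (class_size g) * f g"] f_kernel
      by (simp add: class_size_def K.one_closed)
    then show ?thesis using finite_kernel K.one_closed card_kernel_ge_2 by (simp add: card_Diff_singleton of_nat_diff)
  qed
  also have "(\<Sum>g\<in>carrier G - K. of_nat (class_size g) * f g) = of_nat (card K) * ((\<Sum>g\<in>carrier G. f g) - (\<Sum>g\<in>K. f g))"
  proof -
    have "(\<Sum>g\<in>carrier G - K. of_nat (class_size g) * f g) = (\<Sum>g\<in>carrier G - K. of_nat (card K) * f g)"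
      unfolding class_size_def using K.one_closed by (intro sum.cong) auto
    then show ?thesis using finite_carrier K.subset by (simp add: sum_distrib_left[symmetric] sum_diff)
  qed
  also have "(\<Sum>g\<in>K. f g) = of_nat (card K)" using f_kernel by simp
  also have "(\<Sum>g\<in>carrier G. f g) = of_nat (card K) * (if \<mu> = \<mu>' then of_nat (card H) else 0)"
    unfolding f_def using sum_proj[of "\<lambda>a. \<mu> a * cnj (\<mu>' a)"]
      finite_comm_group.lin_chars_orthogonality[OF finite_comm_group_complement \<mu>]
    by (simp add: order_def)
  finally show ?thesis by (simp add: power2_eq_square algebra_simps)
qed

lemma za_coeff_lift_ind:
  assumes \<mu>: "\<mu> \<in> H_chars" and \<psi>: "\<psi> \<in> K_chars'"
  shows "za_coeff (lift_char \<mu>) (ind_char \<psi>) = of_real (real (card H) - real (card H) ^ 2)"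
    and "za_coeff (ind_char \<psi>) (lift_char \<mu>) = of_real (real (card H) - real (card H) ^ 2)"
proof -
  have \<psi>K: "\<psi> \<in> K_chars" using \<psi> by simp
  have lift: "lift_char \<mu> g = 1" if "g \<in> carrier G" "ind_char \<psi> g \<noteq> 0" for g
    using lift_char_kernel[OF \<mu>] ind_char_outside_kernel[OF \<psi>K] that by blast
  have "za_coeff (lift_char \<mu>) (ind_char \<psi>) = (\<Sum>g\<in>carrier G. of_nat (class_size g) * cnj (ind_char \<psi> g))"
    unfolding za_coeff_def using lift by (intro sum.cong) auto
  also have "\<dots> = cnj (ind_char \<psi> \<one>) + of_nat (card H) * ((\<Sum>g\<in>K. cnj (ind_char \<psi> g)) - cnj (ind_char \<psi> \<one>))"
    by (rule sum_class_size_kernel) (use ind_char_outside_kernel[OF \<psi>K] in simp)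
  finally show "za_coeff (lift_char \<mu>) (ind_char \<psi>) = of_real (real (card H) - real (card H) ^ 2)"
    using ind_char_one[OF \<psi>K] sum_ind_char_kernel[OF \<psi>]
    by (simp add: power2_eq_square algebra_simps flip: cnj_sum)
  have "za_coeff (ind_char \<psi>) (lift_char \<mu>) = (\<Sum>g\<in>carrier G. of_nat (class_size g) * ind_char \<psi> g)"
    unfolding za_coeff_def using lift by (intro sum.cong) auto
  also have "\<dots> = ind_char \<psi> \<one> + of_nat (card H) * ((\<Sum>g\<in>K. ind_char \<psi> g) - ind_char \<psi> \<one>)"
    by (rule sum_class_size_kernel) (use ind_char_outside_kernel[OF \<psi>K] in simp)
  finally show "za_coeff (ind_char \<psi>) (lift_char \<mu>) = of_real (real (card H) - real (card H) ^ 2)"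
    using ind_char_one[OF \<psi>K] sum_ind_char_kernel[OF \<psi>] by (simp add: power2_eq_square algebra_simps)
qed

lemma za_coeff_ind_ind:
  assumes \<psi>: "\<psi> \<in> K_chars'" "\<psi>' \<in> K_chars'"
  shows "za_coeff (ind_char \<psi>) (ind_char \<psi>') = of_real (real (card H) ^ 2 - real (card H) ^ 3 +
     (if \<psi>' \<in> K_orbit \<psi> then real (card K) * real (card H) ^ 2 else 0))"
proof -
  have \<psi>K: "\<psi> \<in> K_chars" "\<psi>' \<in> K_chars" using \<psi> by auto
  have "za_coeff (ind_char \<psi>) (ind_char \<psi>') = (\<Sum>g\<in>carrier G. of_nat (class_size g) * (ind_char \<psi> g * cnj (ind_char \<psi>' g)))"
    unfolding za_coeff_def by (simp add: mult.assoc)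
  also have "\<dots> = ind_char \<psi> \<one> * cnj (ind_char \<psi>' \<one>) +
      of_nat (card H) * ((\<Sum>g\<in>K. ind_char \<psi> g * cnj (ind_char \<psi>' g)) - ind_char \<psi> \<one> * cnj (ind_char \<psi>' \<one>))"
    by (rule sum_class_size_kernel) (use ind_char_outside_kernel[OF \<psi>K(1)] in simp)
  finally show ?thesis
    using ind_char_one[OF \<psi>K(1)] ind_char_one[OF \<psi>K(2)] kernel_inner_product_ind_char[OF \<psi>]
    by (simp add: power2_eq_square power3_eq_cube algebra_simps)
qed

lemma norm_za_coeff_lift_lift:
  assumes \<mu>: "\<mu> \<in> H_chars" "\<mu>' \<in> H_chars"
  shows "cmod (za_coeff (lift_char \<mu>) (lift_char \<mu>')) =
    (if \<mu> = \<mu>' then 1 + real (card H) * (real (card K) - 1) + real (card K) ^ 2 * (real (card H) - 1)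
     else real (card K) ^ 2 - 1 - real (card H) * (real (card K) - 1))"
proof -
  define h k where "h = real (card H)" "k = real (card K)"
  have h2: "2 \<le> h" and hk: "h + 1 \<le> k"
    unfolding h_k_def using card_complement_ge_2 card_complement_less_card_kernel by simp_all
  have "cmod (za_coeff (lift_char \<mu>) (lift_char \<mu>')) = \<bar>1 + h * (k - 1) + k ^ 2 * ((if \<mu> = \<mu>' then h else 0) - 1)\<bar>"
    using za_coeff_lift_lift[OF \<mu>] unfolding h_k_def by (simp only: norm_of_real)
  moreover have "0 \<le> h * (k - 1)" "0 \<le> k ^ 2 * (h - 1)" using h2 hk by simp_all
  moreover have "h * (k - 1) \<le> (k + 1) * (k - 1)" using h2 hk by (intro mult_right_mono) auto
  ultimately show ?thesis unfolding h_k_def[symmetric] by (simp add: power2_eq_square algebra_simps)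
qed

lemma norm_za_coeff_lift_ind:
  assumes "\<mu> \<in> H_chars" "\<psi> \<in> K_chars'"
  shows "cmod (za_coeff (lift_char \<mu>) (ind_char \<psi>)) = real (card H) ^ 2 - real (card H)"
    and "cmod (za_coeff (ind_char \<psi>) (lift_char \<mu>)) = real (card H) ^ 2 - real (card H)"
proof -
  have "real (card H) * 1 \<le> real (card H) * real (card H)"
    using card_complement_ge_2 by (intro mult_left_mono) auto
  then have "real (card H) \<le> real (card H) ^ 2" by (simp add: power2_eq_square)
  then show "cmod (za_coeff (lift_char \<mu>) (ind_char \<psi>)) = real (card H) ^ 2 - real (card H)"
    and "cmod (za_coeff (ind_char \<psi>) (lift_char \<mu>)) = real (card H) ^ 2 - real (card H)"
    using za_coeff_lift_ind[OF assms] by (simp_all only: norm_of_real abs_of_nonpos diff_le_0_iff_le)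
qed

lemma norm_za_coeff_ind_ind:
  assumes "\<psi> \<in> K_chars'" "\<psi>' \<in> K_chars'"
  shows "cmod (za_coeff (ind_char \<psi>) (ind_char \<psi>')) =
    (if \<psi>' \<in> K_orbit \<psi> then real (card H) ^ 2 - real (card H) ^ 3 + real (card K) * real (card H) ^ 2
     else real (card H) ^ 3 - real (card H) ^ 2)"
proof -
  define h k where "h = real (card H)" "k = real (card K)"
  have h2: "2 \<le> h" and hk: "h + 1 \<le> k"
    unfolding h_k_def using card_complement_ge_2 card_complement_less_card_kernel by simp_all
  have "h * h * h \<le> h * h * (1 + k)" "h * h * 1 \<le> h * h * h" using h2 hk by (intro mult_left_mono; simp)+
  moreover have "cmod (za_coeff (ind_char \<psi>) (ind_char \<psi>')) =
      \<bar>h ^ 2 - h ^ 3 + (if \<psi>' \<in> K_orbit \<psi> then k * h ^ 2 else 0)\<bar>"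
    using za_coeff_ind_ind[OF assms] unfolding h_k_def by (simp only: norm_of_real)
  ultimately show ?thesis unfolding h_k_def[symmetric]
    by (simp add: power2_eq_square power3_eq_cube algebra_simps)
qed

lemma row_sum_za_coeff_lift:
  assumes \<mu>: "\<mu> \<in> H_chars"
  defines "h \<equiv> real (card H)" and "k \<equiv> real (card K)"
  shows "(\<Sum>\<chi>\<in>Irr G. degree G (lift_char \<mu>) * degree G \<chi> * cmod (za_coeff (lift_char \<mu>) \<chi>)) =
    (1 + h * (k - 1) + k ^ 2 * (h - 1)) + (h - 1) * (k ^ 2 - 1 - h * (k - 1)) + (k - 1) * (h ^ 2 - h)"
proof -
  have "(\<Sum>\<mu>'\<in>H_chars. degree G (lift_char \<mu>) * degree G (lift_char \<mu>') * cmod (za_coeff (lift_char \<mu>) (lift_char \<mu>'))) =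
      (\<Sum>\<mu>'\<in>H_chars. if \<mu>' = \<mu> then 1 + h * (k - 1) + k ^ 2 * (h - 1) else k ^ 2 - 1 - h * (k - 1))"
    using degree_lift_char norm_za_coeff_lift_lift \<mu> unfolding h_def k_def by (intro sum.cong) auto
  also have "\<dots> = real (card {\<mu>' \<in> H_chars. \<mu>' = \<mu>}) * (1 + h * (k - 1) + k ^ 2 * (h - 1)) +
      real (card {\<mu>' \<in> H_chars. \<mu>' \<noteq> \<mu>}) * (k ^ 2 - 1 - h * (k - 1))"
    by (rule sum_if_count[OF finite_H_chars])
  also have "{\<mu>' \<in> H_chars. \<mu>' = \<mu>} = {\<mu>}" using \<mu> by auto
  also have "{\<mu>' \<in> H_chars. \<mu>' \<noteq> \<mu>} = H_chars - {\<mu>}" by auto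
  also have "real (card (H_chars - {\<mu>})) = h - 1"
    using \<mu> card_H_chars card_complement_ge_2 finite_H_chars by (simp add: h_def card_Diff_singleton of_nat_diff)
  finally have lift: "(\<Sum>\<mu>'\<in>H_chars. degree G (lift_char \<mu>) * degree G (lift_char \<mu>') *
      cmod (za_coeff (lift_char \<mu>) (lift_char \<mu>'))) =
      (1 + h * (k - 1) + k ^ 2 * (h - 1)) + (h - 1) * (k ^ 2 - 1 - h * (k - 1))" by simp
  have "(\<Sum>\<psi>\<in>K_chars'. degree G (lift_char \<mu>) * degree G (ind_char \<psi>) * cmod (za_coeff (lift_char \<mu>) (ind_char \<psi>))) =
      (k - 1) * (h * (h ^ 2 - h))"
    using degree_lift_char[OF \<mu>] degree_ind_char norm_za_coeff_lift_ind(1)[OF \<mu>] card_K_chars'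
      card_kernel_ge_2 unfolding h_def k_def by (simp add: of_nat_diff)
  then show ?thesis
    using sum_Irr[of "\<lambda>\<chi>. degree G (lift_char \<mu>) * degree G \<chi> * cmod (za_coeff (lift_char \<mu>) \<chi>)"] lift
      card_complement_ge_2 unfolding h_def by simp
qed

lemma row_sum_za_coeff_ind:
  assumes \<psi>: "\<psi> \<in> K_chars'"
  defines "h \<equiv> real (card H)" and "k \<equiv> real (card K)"
  shows "(\<Sum>\<chi>\<in>Irr G. degree G (ind_char \<psi>) * degree G \<chi> * cmod (za_coeff (ind_char \<psi>) \<chi>)) =
    h ^ 2 * (h ^ 2 - h) + h * (h * (h ^ 2 - h ^ 3 + k * h ^ 2) + (k - 1 - h) * (h ^ 3 - h ^ 2))"
proof -
  have "(\<Sum>\<mu>\<in>H_chars. degree G (ind_char \<psi>) * degree G (lift_char \<mu>) * cmod (za_coeff (ind_char \<psi>) (lift_char \<mu>))) =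
      h ^ 2 * (h ^ 2 - h)"
    using degree_lift_char degree_ind_char \<psi> norm_za_coeff_lift_ind(2)[OF _ \<psi>] card_H_chars
    unfolding h_def by (simp add: power2_eq_square)
  moreover have "(\<Sum>\<psi>'\<in>K_chars'. degree G (ind_char \<psi>) * degree G (ind_char \<psi>') * cmod (za_coeff (ind_char \<psi>) (ind_char \<psi>'))) =
      h * h * (\<Sum>\<psi>'\<in>K_chars'. if \<psi>' \<in> K_orbit \<psi> then h ^ 2 - h ^ 3 + k * h ^ 2 else h ^ 3 - h ^ 2)"
    using degree_ind_char norm_za_coeff_ind_ind \<psi> unfolding h_def k_def by (simp add: sum_distrib_left)
  moreover have "(\<Sum>\<psi>'\<in>K_chars'. if \<psi>' \<in> K_orbit \<psi> then h ^ 2 - h ^ 3 + k * h ^ 2 else h ^ 3 - h ^ 2) =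
      h * (h ^ 2 - h ^ 3 + k * h ^ 2) + (k - 1 - h) * (h ^ 3 - h ^ 2)"
  proof -
    have "{\<psi>' \<in> K_chars'. \<psi>' \<in> K_orbit \<psi>} = K_orbit \<psi>" "{\<psi>' \<in> K_chars'. \<psi>' \<notin> K_orbit \<psi>} = K_chars' - K_orbit \<psi>"
      using K_orbit_subset[OF \<psi>] by auto
    moreover have "real (card (K_chars' - K_orbit \<psi>)) = k - 1 - h"
      using card_Diff_subset[OF _ K_orbit_subset[OF \<psi>]] card_mono[OF _ K_orbit_subset[OF \<psi>]]
        finite_subset[OF K_orbit_subset[OF \<psi>]] finite_K_chars card_K_chars' card_K_orbit[OF \<psi>] card_kernel_ge_2
      unfolding h_def k_def by (simp add: of_nat_diff)
    ultimately show ?thesis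
      using sum_if_count[of "K_chars'" "\<lambda>\<psi>'. \<psi>' \<in> K_orbit \<psi>"] finite_K_chars card_K_orbit[OF \<psi>]
      unfolding h_def by simp
  qed
  ultimately show ?thesis
    using sum_Irr[of "\<lambda>\<chi>. degree G (ind_char \<psi>) * degree G \<chi> * cmod (za_coeff (ind_char \<psi>) \<chi>)"]
      card_complement_ge_2 unfolding h_def by (simp add: power2_eq_square)
qed

lemma AMZA_value:
  "AMZA G = 1 + (2 * ((real (card H))\<^sup>2 - 1) / real (card H)) *
     (1 - (real (card H) - 1) / real (card K)) * (1 - 1 / real (card K))"
proof -
  define h k where "h = real (card H)" "k = real (card K)"
  have N: "real (card (carrier G)) = k * h"
    unfolding h_k_def using card_kernel_mult_card_complement by (metis of_nat_mult)
  have h0: "h \<noteq> 0" and k0: "k \<noteq> 0"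
    unfolding h_k_def using card_complement_ge_2 card_kernel_ge_2 by auto
  have "(\<Sum>\<chi>\<in>Irr G. \<Sum>\<chi>'\<in>Irr G. degree G \<chi> * degree G \<chi>' * cmod (za_coeff \<chi> \<chi>')) =
      h * ((1 + h * (k - 1) + k ^ 2 * (h - 1)) + (h - 1) * (k ^ 2 - 1 - h * (k - 1)) + (k - 1) * (h ^ 2 - h)) +
      (k - 1) * (h ^ 2 * (h ^ 2 - h) + h * (h * (h ^ 2 - h ^ 3 + k * h ^ 2) + (k - 1 - h) * (h ^ 3 - h ^ 2))) / h"
    using sum_Irr[of "\<lambda>\<chi>. \<Sum>\<chi>'\<in>Irr G. degree G \<chi> * degree G \<chi>' * cmod (za_coeff \<chi> \<chi>')"]
      row_sum_za_coeff_lift row_sum_za_coeff_ind card_H_chars card_K_chars' card_kernel_ge_2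
    unfolding h_k_def by (simp add: of_nat_diff)
  then have "AMZA G = (1 / (k * h)\<^sup>2) *
      (h * ((1 + h * (k - 1) + k ^ 2 * (h - 1)) + (h - 1) * (k ^ 2 - 1 - h * (k - 1)) + (k - 1) * (h ^ 2 - h)) +
      (k - 1) * (h ^ 2 * (h ^ 2 - h) + h * (h * (h ^ 2 - h ^ 3 + k * h ^ 2) + (k - 1 - h) * (h ^ 3 - h ^ 2))) / h)"
    using AMZA_eq_sum_za_coeff N by simp
  also have "\<dots> = 1 + (2 * (h\<^sup>2 - 1) / h) * (1 - (h - 1) / k) * (1 - 1 / k)"
    using h0 k0 by (simp add: divide_simps) (simp add: algebra_simps power2_eq_square power3_eq_cube)
  finally show ?thesis unfolding h_k_def .
qed

end

theorem theorem2p2: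
  fixes G :: "('a, 'b) monoid_scheme" and H :: "'a set"
  assumes "group G" and "finite (carrier G)"
    and "frobenius_complement G H"
    and "comm_group (G\<lparr>carrier := frobenius_kernel G H\<rparr>)"
    and "comm_group (G\<lparr>carrier := H\<rparr>)"
  shows "AMZA G = AMZL G \<and>
         AMZL G = 1 + (2 * ((real (card H))^2 - 1) / real (card H)) *
                      (1 - (real (card H) - 1) / real (card (frobenius_kernel G H))) *
                      (1 - 1 / real (card (frobenius_kernel G H)))"
proof -
  interpret abelian_frobenius G H
    using assms unfolding abelian_frobenius_def abelian_frobenius_axioms_def by blast
  show ?thesis using AMZA_value AMZL_value by simp
qed

end
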